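(* Let $g:\mathcal{D}([0,\infty),\mathbb{R})\to\mathcal{D}([0,\infty),\mathbb{R})$ be the map $$g:(W(t))_{t\geq 0} \mapsto \left(W\Big(\inf\Big\{s\geq 0: \int_0^s \mathbf{1}_{\{W(u) \geq 0\}}\, du \geq t\Big\}\Big)\right)_{t\geq 0}.$$ Let $D_g\subseteq \mathcal{D}([0,\infty),\mathbb{R})$ be the set of discontinuity points of $g$ with respect to the Skorokhod metric $d_\infty$. Then $\mathbb{P}((B_t)_{t\geq 0} \in D_g)=0$, where $B$ is a standard Brownian motion.
   Context: $\mathcal{D}([0,T],\mathbb{R})$ and $\mathcal{D}([0,\infty),\mathbb{R})$ are the spaces of càdlàg paths. For $T>0$ let $\Lambda_T$ be the set of continuous strictly increasing bijections $[0,T]\to[0,T]$, and for $X,Y\in\mathcal{D}([0,T],\mathbb{R})$, $d_T(X,Y):=\inf_{\lambda\in\Lambda_T}\{\sup_{t\in[0,T]}|t-\lambda(t)|\vee\sup_{t\in[0,T]}|X(t)-Y(\lambda(t))|\}$. For $m>0$ let $g_m(t)=(m-t)\mathbf{1}_{\{m-1\le t\le m\}}+\mathbf{1}_{\{t\le m-1\}}$ and $\psi_m:\mathcal{D}([0,\infty),\mathbb{R})\to\mathcal{D}([0,m],\mathbb{R})$, $\psi_m((X(t))_{t\ge0})=(X(t)g_m(t))_{0\le t\le m}$. Then $d_\infty(X,Y):=\sum_{T\in\mathbb{N}}2^{-T}(1\wedge d_T(\psi_T(X),\psi_T(Y)))$. *)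

theory Defs
  imports "HOL-Probability.Probability"
begin

(* Cadlag paths on [0,\<infinity>) (values at negative times are irrelevant) *)
definition cadlag :: "(real \<Rightarrow> real) \<Rightarrow> bool" where
  "cadlag X \<longleftrightarrow> (\<forall>t\<ge>0. (X \<longlongrightarrow> X t) (at_right t) \<and>
                        (t > 0 \<longrightarrow> (\<exists>l. (X \<longlongrightarrow> l) (at_left t))))"

definition Lambda :: "real \<Rightarrow> (real \<Rightarrow> real) set" where
  "Lambda T = {l. continuous_on {0..T} l \<and> strict_mono_on {0..T} l \<and> bij_betw l {0..T} {0..T}}"

(* Skorokhod J1 distance d_T on D([0,T]) (ereal-valued, so it is defined for any functions) *)
definition skor_d :: "real \<Rightarrow> (real \<Rightarrow> real) \<Rightarrow> (real \<Rightarrow> real) \<Rightarrow> ereal" where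
  "skor_d T X Y = (INF l\<in>Lambda T. max (SUP t\<in>{0..T}. ereal \<bar>t - l t\<bar>)
                                        (SUP t\<in>{0..T}. ereal \<bar>X t - Y (l t)\<bar>))"

definition cutoff :: "real \<Rightarrow> real \<Rightarrow> real" where
  "cutoff m t = (m - t) * (if m - 1 \<le> t \<and> t \<le> m then 1 else 0) + (if t \<le> m - 1 then 1 else 0)"

definition psi :: "real \<Rightarrow> (real \<Rightarrow> real) \<Rightarrow> (real \<Rightarrow> real)" where
  "psi m X = (\<lambda>t. X t * cutoff m t)"

definition skor_dinf :: "(real \<Rightarrow> real) \<Rightarrow> (real \<Rightarrow> real) \<Rightarrow> real" where
  "skor_dinf X Y = (\<Sum>n. (1/2) ^ (Suc n) *
      real_of_ereal (min 1 (skor_d (real (Suc n)) (psi (real (Suc n)) X) (psi (real (Suc n)) Y))))"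

(* inverse of the occupation time of [0,\<infinity>); convention: if the set is empty, the value is 0 *)
definition occ_inv :: "(real \<Rightarrow> real) \<Rightarrow> real \<Rightarrow> real" where
  "occ_inv W t = Inf {s. s \<ge> 0 \<and> integral {0..s} (\<lambda>u. if W u \<ge> 0 then 1 else 0) \<ge> t}"

definition gmap :: "(real \<Rightarrow> real) \<Rightarrow> (real \<Rightarrow> real)" where
  "gmap W = (\<lambda>t. if {s. s \<ge> 0 \<and> integral {0..s} (\<lambda>u. if W u \<ge> 0 then 1 else 0) \<ge> t} = {}
                  then 0 else W (occ_inv W t))"

definition Dg :: "(real \<Rightarrow> real) set" where
  "Dg = {X. cadlag X \<and> \<not> (\<forall>e>0. \<exists>d>0. \<forall>Y. cadlag Y \<and> skor_dinf X Y < d \<longrightarrow>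
                                     skor_dinf (gmap X) (gmap Y) < e)}"

definition std_brownian_motion :: "'a measure \<Rightarrow> ('a \<Rightarrow> real \<Rightarrow> real) \<Rightarrow> bool" where
  "std_brownian_motion M B \<longleftrightarrow> prob_space M \<and>
     (\<forall>t\<ge>0. (\<lambda>\<omega>. B \<omega> t) \<in> borel_measurable M) \<and>
     (\<forall>\<omega>\<in>space M. B \<omega> 0 = 0 \<and> continuous_on {0..} (B \<omega>)) \<and>
     (\<forall>s t. 0 \<le> s \<and> s < t \<longrightarrow>
        distributed M lborel (\<lambda>\<omega>. B \<omega> t - B \<omega> s) (\<lambda>x. ennreal (normal_density 0 (sqrt (t - s)) x))) \<and>
     (\<forall>(n::nat) (ts::nat \<Rightarrow> real). ts 0 \<ge> 0 \<and> (\<forall>i<n. ts i < ts (Suc i)) \<longrightarrow>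
        prob_space.indep_vars M (\<lambda>_. borel) (\<lambda>i \<omega>. B \<omega> (ts (Suc i)) - B \<omega> (ts i)) {..<n})"

end

theory Submission
  imports Defs
begin

text \<open>
  Let \<tau>_X be the inverse occupation time of [0, \<infinity>) of a path X, so that g X = X \<circ> \<tau>_X.
  The map g is continuous at every continuous path X whose zero set is Lebesgue-null and whose
  occupation time of [0, \<infinity>) is unbounded. If Y is uniformly close to X on a compact interval,
  the occupation times of X and Y differ at most by the time X spends near 0, which is small;
  hence \<tau>_Y(t) lies between \<tau>_X(t - \<eta>) and \<tau>_X(t + \<eta>). If these two times are close,
  continuity of X gives X(\<tau>_X(t)) \<approx> X(\<tau>_Y(t)); otherwise X spends almost no time in [0, \<infinity>)
  between them, so X is small there, while X(\<tau>_X(t)) \<ge> 0 and X(\<tau>_Y(t)) \<ge> -\<delta>. Convergence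
  in d_\<infinity> to a continuous path is locally uniform, and locally uniform closeness of the images
  gives closeness in d_\<infinity>.

  Brownian paths have both properties almost surely. The zero set is null by Fubini, since
  P(B_u = 0) = 0. For the occupation time, take unit intervals starting at times b_k that grow
  so fast that P(B_u \<ge> 0, B_v \<ge> 0) \<le> 1/4 + O(2^-k) for u in an earlier interval and v
  in the k-th. The times R_k that B spends in [0, \<infinity>) during these intervals then have mean 1/2
  and nearly vanishing correlations, so the sum of the first n of them has mean n/2 and
  variance O(n), and Chebyshev's inequality shows that these sums exceed every bound almost
  surely.
\<close>

section \<open>Measurability of right-continuous paths\<close>

definition upper_grid :: "nat \<Rightarrow> real \<Rightarrow> real" where
  "upper_grid n x = \<lceil>real (Suc n) * x\<rceil> / real (Suc n)"

lemma upper_grid_ge: "x \<le> upper_grid n x"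
  unfolding upper_grid_def by (simp add: field_simps)

lemma upper_grid_le: "upper_grid n x \<le> x + 1 / real (Suc n)"
proof -
  have "real_of_int \<lceil>real (Suc n) * x\<rceil> \<le> real (Suc n) * x + 1" by linarith
  then have "real_of_int \<lceil>real (Suc n) * x\<rceil> / real (Suc n) \<le> (real (Suc n) * x + 1) / real (Suc n)"
    by (rule divide_right_mono) simp
  then show ?thesis unfolding upper_grid_def by (simp add: add_divide_distrib)
qed

lemma upper_grid_tendsto: "(\<lambda>n. upper_grid n x) \<longlonglongrightarrow> x"
proof (rule tendsto_sandwich[of "\<lambda>n. x" _ _ "\<lambda>n. x + 1 / real (Suc n)"])
  show "\<forall>\<^sub>F n in sequentially. x \<le> upper_grid n x"
    by (simp add: upper_grid_ge)
  show "\<forall>\<^sub>F n in sequentially. upper_grid n x \<le> x + 1 / real (Suc n)"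
    by (intro always_eventually allI upper_grid_le)
  have "(\<lambda>n. 1 / real (Suc n)) \<longlonglongrightarrow> 0"
    using LIMSEQ_inverse_real_of_nat by (simp add: inverse_eq_divide)
  then show "(\<lambda>n. x + 1 / real (Suc n)) \<longlonglongrightarrow> x"
    using tendsto_add[of "\<lambda>n. x" x sequentially] by fastforce
qed simp

text \<open>Right-continuity makes F x t the limit of the values of F x at the grid
  points above t, and each grid contains only countably many times.\<close>

lemma borel_measurable_right_continuous_process:
  fixes F :: "'a \<Rightarrow> real \<Rightarrow> real"
  assumes rc: "\<And>x t. x \<in> space N \<Longrightarrow> 0 \<le> t \<Longrightarrow> (F x \<longlongrightarrow> F x t) (at_right t)"
    and meas: "\<And>t. 0 \<le> t \<Longrightarrow> (\<lambda>x. F x t) \<in> borel_measurable N"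
  shows "(\<lambda>p. F (fst p) (max 0 (snd p))) \<in> borel_measurable (N \<Otimes>\<^sub>M lborel)"
proof (rule borel_measurable_LIMSEQ_metric)
  fix n :: nat
  have "(\<lambda>p. F (fst p) (max 0 (real_of_int k / real (Suc n)))) \<in> borel_measurable (N \<Otimes>\<^sub>M lborel)"
    for k :: int
    by (rule measurable_compose[OF measurable_fst meas]) simp
  moreover have "(\<lambda>p. \<lceil>real (Suc n) * max 0 (snd p)\<rceil>) \<in> N \<Otimes>\<^sub>M lborel \<rightarrow>\<^sub>M count_space UNIV"
    by measurable
  ultimately have "(\<lambda>p. F (fst p) (max 0 (real_of_int \<lceil>real (Suc n) * max 0 (snd p)\<rceil> / real (Suc n))))
      \<in> borel_measurable (N \<Otimes>\<^sub>M lborel)"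
    by (rule measurable_compose_countable'[where I=UNIV]) auto
  moreover have "max 0 (upper_grid n (max 0 x)) = upper_grid n (max 0 x)" for x
    using upper_grid_ge[of "max 0 x" n] by simp
  ultimately show "(\<lambda>p. F (fst p) (upper_grid n (max 0 (snd p)))) \<in> borel_measurable (N \<Otimes>\<^sub>M lborel)"
    by (simp add: upper_grid_def)
next
  fix p :: "'a \<times> real" assume p: "p \<in> space (N \<Otimes>\<^sub>M lborel)"
  define m where "m = max 0 (snd p)"
  have "at m within {m..} = at_right m"
    by (rule at_within_Ici_at_right)
  then have "continuous (at m within {m..}) (F (fst p))"
    using rc[of "fst p" m] p by (simp add: m_def continuous_within space_pair_measure mem_Times_iff)
  then have "(\<lambda>n. F (fst p) (upper_grid n m)) \<longlonglongrightarrow> F (fst p) m"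
    unfolding continuous_within_sequentially comp_def
    by (rule allE[where x="\<lambda>n. upper_grid n m"]) (simp add: upper_grid_tendsto upper_grid_ge)
  then show "(\<lambda>n. F (fst p) (upper_grid n (max 0 (snd p)))) \<longlonglongrightarrow> F (fst p) (max 0 (snd p))"
    by (simp add: m_def)
qed

definition path_measurable :: "(real \<Rightarrow> real) \<Rightarrow> bool" where
  "path_measurable X \<longleftrightarrow> (\<lambda>u. X (max 0 u)) \<in> borel_measurable borel"

lemma path_measurable_cadlag: "cadlag X \<Longrightarrow> path_measurable X"
proof -
  assume "cadlag X"
  then have "0 \<le> t \<Longrightarrow> (X \<longlongrightarrow> X t) (at_right t)" for t
    unfolding cadlag_def by simp
  then have "(\<lambda>p. X (max 0 (snd p))) \<in> borel_measurable (count_space (UNIV :: unit set) \<Otimes>\<^sub>M lborel)"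
    by (rule borel_measurable_right_continuous_process[where F="\<lambda>_. X"])
       (simp_all add: measurable_count_space_eq1)
  moreover have "(\<lambda>u. ((), u)) \<in> borel \<rightarrow>\<^sub>M count_space UNIV \<Otimes>\<^sub>M lborel"
    by (intro measurable_Pair measurable_const) (simp_all add: measurable_lborel2)
  ultimately have "(\<lambda>u. X (max 0 (snd ((), u)))) \<in> borel_measurable borel"
    by (rule measurable_compose[rotated])
  then show ?thesis unfolding path_measurable_def by simp
qed

lemma path_measurable_continuous:
  assumes "continuous_on {0..} X"
  shows "path_measurable X"
  unfolding path_measurable_def
proof (rule borel_measurable_continuous_onI)
  have "continuous_on UNIV (\<lambda>u. max 0 u :: real)" by (intro continuous_intros)
  then show "continuous_on UNIV (\<lambda>u. X (max 0 u))"
    by (rule continuous_on_compose2[OF assms]) auto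
qed

lemma integrable_on_level_indicator:
  assumes "path_measurable X" "A \<in> sets borel" "0 \<le> a"
  shows "(\<lambda>u. if X u \<in> A then 1 else 0 :: real) integrable_on {a..b}"
proof -
  let ?E = "{u. X (max 0 u) \<in> A}"
  have "?E \<in> sets borel"
    using measurable_sets[of "\<lambda>u. X (max 0 u)" borel borel A] assms(1,2)
    by (auto simp: path_measurable_def vimage_def)
  then have "?E \<inter> {a..b} \<in> lmeasurable"
    by (intro bounded_set_imp_lmeasurable) (auto intro: bounded_Int sets_completionI_sets)
  then have "indicat_real ?E integrable_on {a..b}" by (simp add: integrable_on_indicator)
  then show ?thesis
    by (rule integrable_eq) (use assms(3) in \<open>auto simp: indicator_def max_def\<close>)
qed

section \<open>Occupation time and its inverse\<close>

definition nonneg_ind :: "(real \<Rightarrow> real) \<Rightarrow> real \<Rightarrow> real" where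
  "nonneg_ind X = (\<lambda>u. if 0 \<le> X u then 1 else 0)"

definition occupation :: "(real \<Rightarrow> real) \<Rightarrow> real \<Rightarrow> real" where
  "occupation X s = integral {0..s} (nonneg_ind X)"

lemma occ_inv_eq: "occ_inv X t = Inf {s. 0 \<le> s \<and> t \<le> occupation X s}"
  unfolding occ_inv_def occupation_def nonneg_ind_def ..

lemma gmap_eq:
  "gmap X t = (if {s. 0 \<le> s \<and> t \<le> occupation X s} = {} then 0 else X (occ_inv X t))"
  unfolding gmap_def occ_inv_def occupation_def nonneg_ind_def by simp

lemma occ_inv_le: "0 \<le> s \<Longrightarrow> t \<le> occupation X s \<Longrightarrow> occ_inv X t \<le> s"
  unfolding occ_inv_eq by (rule cInf_lower) (auto intro: bdd_belowI[of _ 0])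

lemma occupation_nonpos [simp]: "s \<le> 0 \<Longrightarrow> occupation X s = 0"
  unfolding occupation_def by (cases "s = 0") auto

lemma integral_nonneg_ind_eq_0:
  assumes "\<And>u. u \<in> {a..b} \<Longrightarrow> X u < 0"
  shows "integral {a..b} (nonneg_ind X) = 0"
proof -
  have "integral {a..b} (nonneg_ind X) = integral {a..b} (\<lambda>_. 0 :: real)"
    by (rule integral_cong) (use assms in \<open>force simp: nonneg_ind_def\<close>)
  then show ?thesis by simp
qed

lemma integral_nonneg_ind_eq_length:
  assumes "\<And>u. u \<in> {a..b} \<Longrightarrow> 0 \<le> X u" "a \<le> b"
  shows "integral {a..b} (nonneg_ind X) = b - a"
proof -
  have "integral {a..b} (nonneg_ind X) = integral {a..b} (\<lambda>_. 1 :: real)"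
    by (rule integral_cong) (use assms in \<open>force simp: nonneg_ind_def\<close>)
  then show ?thesis using assms(2) by simp
qed

context
  fixes X :: "real \<Rightarrow> real"
  assumes X: "path_measurable X"
begin

lemma nonneg_ind_integrable: "0 \<le> a \<Longrightarrow> nonneg_ind X integrable_on {a..b}"
  using integrable_on_level_indicator[OF X, of "{0..}"] by (simp add: nonneg_ind_def)

lemma occupation_diff:
  assumes "0 \<le> a" "a \<le> b"
  shows "occupation X b - occupation X a = integral {a..b} (nonneg_ind X)"
  using Henstock_Kurzweil_Integration.integral_combine[OF assms nonneg_ind_integrable[of 0 b]]
  unfolding occupation_def by simp

lemma occupation_increment_bounds:
  assumes "a \<le> b"
  shows "0 \<le> occupation X b - occupation X a \<and> occupation X b - occupation X a \<le> b - a"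
proof -
  have bounds: "0 \<le> integral {c..b} (nonneg_ind X) \<and> integral {c..b} (nonneg_ind X) \<le> b - c"
    if "0 \<le> c" "c \<le> b" for c
  proof -
    have "integral {c..b} (nonneg_ind X) \<le> integral {c..b} (\<lambda>_. 1::real)"
      by (rule integral_le[OF nonneg_ind_integrable]) (use that in \<open>auto simp: nonneg_ind_def\<close>)
    moreover have "0 \<le> integral {c..b} (nonneg_ind X)"
      by (rule integral_nonneg[OF nonneg_ind_integrable]) (use that in \<open>auto simp: nonneg_ind_def\<close>)
    ultimately show ?thesis using that by simp
  qed
  consider "0 \<le> a" | "a < 0" "0 \<le> b" | "b < 0" by linarith
  then show ?thesis
  proof cases
    case 1 then show ?thesis using bounds[OF 1 assms] occupation_diff[OF 1 assms] by simp
  next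
    case 2 then show ?thesis using bounds[of 0] occupation_diff[of 0 b] by simp
  next
    case 3 then show ?thesis using assms by simp
  qed
qed

lemma occupation_mono: "a \<le> b \<Longrightarrow> occupation X a \<le> occupation X b"
  using occupation_increment_bounds by fastforce

lemma continuous_occupation: "continuous_on UNIV (occupation X)"
proof -
  have "\<bar>occupation X x - occupation X y\<bar> \<le> \<bar>x - y\<bar>" for x y
    using occupation_increment_bounds[of x y] occupation_increment_bounds[of y x]
    by (cases "x \<le> y") auto
  then show ?thesis unfolding continuous_on_iff dist_real_def by (metis le_less_trans)
qed

lemma occupation_ge_length:
  assumes "\<And>u. u \<in> {c..d} \<Longrightarrow> 0 \<le> X u" "0 \<le> p" "p \<le> c" "c \<le> d" "d \<le> q"
  shows "d - c \<le> occupation X q - occupation X p"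
  using occupation_diff[of c d] integral_nonneg_ind_eq_length[OF assms(1,4)]
    occupation_mono[of p c] occupation_mono[of d q] assms(2-5)
  by simp

context
  fixes s\<^sub>0 t :: real
  assumes reached: "0 \<le> s\<^sub>0" "t \<le> occupation X s\<^sub>0"
begin

lemma occ_inv_mem: "0 \<le> occ_inv X t \<and> t \<le> occupation X (occ_inv X t)"
proof -
  have "{s. 0 \<le> s \<and> t \<le> occupation X s} = {0..} \<inter> {s. t \<le> occupation X s}" by auto
  moreover have "closed {s. t \<le> occupation X s}"
    using continuous_occupation by (intro closed_Collect_le) (auto intro: continuous_on_const)
  ultimately have "closed {s. 0 \<le> s \<and> t \<le> occupation X s}" by (simp add: closed_Int)
  then have "occ_inv X t \<in> {s. 0 \<le> s \<and> t \<le> occupation X s}"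
    unfolding occ_inv_eq using reached
    by (intro closed_contains_Inf) (auto intro: bdd_belowI[of _ 0])
  then show ?thesis by simp
qed

lemma occ_inv_nonneg: "0 \<le> occ_inv X t"
  using occ_inv_mem by simp

lemma occupation_occ_inv_ge: "t \<le> occupation X (occ_inv X t)"
  using occ_inv_mem by simp

lemma occ_inv_le_reached: "occ_inv X t \<le> s\<^sub>0"
  using occ_inv_le reached by blast

lemma gmap_eq_reached: "gmap X t = X (occ_inv X t)"
  unfolding gmap_eq using reached by auto

lemma occupation_less_before_occ_inv: "0 \<le> s \<Longrightarrow> s < occ_inv X t \<Longrightarrow> occupation X s < t"
  using occ_inv_le[of s t X] by force

lemma occupation_occ_inv_le: "occupation X (occ_inv X t) \<le> max t 0"
proof (cases "occ_inv X t = 0")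
  case False
  then have pos: "0 < occ_inv X t" using occ_inv_nonneg by simp
  have "(occupation X \<longlongrightarrow> occupation X (occ_inv X t)) (at_left (occ_inv X t))"
    using continuous_occupation
    by (simp add: continuous_on_eq_continuous_at isCont_def filterlim_at_split)
  moreover have "\<forall>\<^sub>F s in at_left (occ_inv X t). occupation X s \<le> t"
    using occupation_less_before_occ_inv
    by (intro eventually_at_leftI[of 0]) (auto simp: pos less_imp_le)
  ultimately have "occupation X (occ_inv X t) \<le> t" by (rule tendsto_upperbound) simp
  then show ?thesis by simp
qed simp

end

end

text \<open>If X were below -c at occ_inv W t, then W would be negative on a left
  neighbourhood of occ_inv W t, so its occupation time would reach t earlier.\<close>

lemma ge_at_occ_inv:
  fixes X W :: "real \<Rightarrow> real" and c :: real
  assumes X: "continuous_on {0..} X" and W: "path_measurable W"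
    and t: "0 < t" and reached: "0 \<le> s\<^sub>0" "t \<le> occupation W s\<^sub>0"
    and neg: "\<And>u. 0 \<le> u \<Longrightarrow> u \<le> occ_inv W t \<Longrightarrow> X u < - c \<Longrightarrow> W u < 0"
  shows "- c \<le> X (occ_inv W t)"
proof (rule ccontr)
  define \<tau> where "\<tau> = occ_inv W t"
  have \<tau>: "0 \<le> \<tau>" "t \<le> occupation W \<tau>"
    using occ_inv_mem[OF W reached] unfolding \<tau>_def by auto
  then have "0 < \<tau>" using t by (cases "\<tau> = 0") auto
  assume "\<not> - c \<le> X (occ_inv W t)"
  then have "0 < - c - X \<tau>" unfolding \<tau>_def by simp
  then obtain \<rho> where \<rho>: "\<rho> > 0" "\<And>u. u \<in> {0..} \<Longrightarrow> dist u \<tau> < \<rho> \<Longrightarrow> dist (X u) (X \<tau>) < - c - X \<tau>"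
    using X \<open>0 \<le> \<tau>\<close> unfolding continuous_on_iff by (metis atLeast_iff)
  define a where "a = max (\<tau>/2) (\<tau> - \<rho>/2)"
  have a: "0 \<le> a" "a < \<tau>" using \<open>0 < \<tau>\<close> \<rho>(1) unfolding a_def by auto
  have "W u < 0" if "u \<in> {a..\<tau>}" for u
  proof -
    have "dist (X u) (X \<tau>) < - c - X \<tau>"
      using \<rho> that a unfolding a_def dist_real_def by auto
    then show ?thesis using neg[of u] that a unfolding \<tau>_def dist_real_def by auto
  qed
  then have "occupation W a = occupation W \<tau>"
    using occupation_diff[OF W a(1), of \<tau>] a integral_nonneg_ind_eq_0[of a \<tau> W] by simp
  then show False
    using occupation_less_before_occ_inv[OF W reached a(1)] a \<tau> unfolding \<tau>_def by simp
qed

section \<open>Continuity of the time change\<close>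

lemma occupation_close:
  assumes X: "path_measurable X" and Y: "path_measurable Y"
    and close: "\<And>u. u \<in> {0..s} \<Longrightarrow> \<bar>X u - Y u\<bar> < \<delta>"
  shows "\<bar>occupation Y s - occupation X s\<bar> \<le> integral {0..s} (\<lambda>u. if \<bar>X u\<bar> < \<delta> then 1 else 0)"
proof -
  have near: "(\<lambda>u. if \<bar>X u\<bar> < \<delta> then 1 else 0 :: real) integrable_on {0..s}"
    using integrable_on_level_indicator[OF X, of "{x. \<bar>x\<bar> < \<delta>}" 0 s]
    by (simp add: borel_open open_Collect_less continuous_intros)
  have "occupation Y s - occupation X s = integral {0..s} (\<lambda>u. nonneg_ind Y u - nonneg_ind X u)"
    unfolding occupation_def
    by (rule integral_diff[OF nonneg_ind_integrable[OF Y] nonneg_ind_integrable[OF X], symmetric]) simp_all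
  also have "\<bar>\<dots>\<bar> \<le> integral {0..s} (\<lambda>u. if \<bar>X u\<bar> < \<delta> then 1 else 0)"
    using integral_norm_bound_integral[OF integrable_diff[OF nonneg_ind_integrable[OF Y]
        nonneg_ind_integrable[OF X]] near] close
    by (force simp: nonneg_ind_def)
  finally show ?thesis .
qed

text \<open>Dominated convergence as \<delta> tends to 0: the integrands tend to the indicator
  of the zero set of X, which is null.\<close>

lemma time_near_zero_small:
  fixes X :: "real \<Rightarrow> real" and \<eta> :: real
  assumes X: "continuous_on {0..} X" and null: "emeasure lborel {u. 0 < u \<and> X u = 0} = 0"
    and \<eta>: "0 < \<eta>"
  shows "\<exists>\<delta>>0. integral {0..S} (\<lambda>u. if \<bar>X u\<bar> < \<delta> then 1 else 0) < \<eta>"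
proof -
  have mX: "path_measurable X" by (rule path_measurable_continuous[OF X])
  let ?f = "\<lambda>k u. if \<bar>X u\<bar> < 1 / real (Suc k) then 1 else 0 :: real"
  let ?g = "\<lambda>u. if X u = 0 then 1 else 0 :: real"
  have "(\<lambda>k. integral {0..S} (?f k)) \<longlonglongrightarrow> integral {0..S} ?g"
  proof (rule dominated_convergence(2)[where h="\<lambda>u. 1"])
    show "?f k integrable_on {0..S}" for k
      using integrable_on_level_indicator[OF mX, of "{x. \<bar>x\<bar> < 1 / real (Suc k)}" 0 S]
      by (simp add: borel_open open_Collect_less continuous_intros)
    fix u :: real
    show "(\<lambda>k. ?f k u) \<longlonglongrightarrow> ?g u"
    proof (cases "X u = 0")
      case False
      then obtain k\<^sub>0 where k\<^sub>0: "inverse (real (Suc k\<^sub>0)) < \<bar>X u\<bar>"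
        using reals_Archimedean[of "\<bar>X u\<bar>"] by auto
      have "?f k u = 0" if "k\<^sub>0 \<le> k" for k
      proof -
        have "1 / real (Suc k) \<le> inverse (real (Suc k\<^sub>0))"
          using that by (simp add: inverse_eq_divide frac_le)
        then show ?thesis using k\<^sub>0 by auto
      qed
      then have "(\<lambda>k. ?f k u) \<longlonglongrightarrow> 0"
        by (intro tendsto_eventually eventually_sequentiallyI)
      then show ?thesis using False by simp
    qed simp
  qed auto
  moreover have "integral {0..S} ?g = 0"
  proof -
    let ?Z = "{u. 0 < u \<and> X u = 0}"
    have "?Z = (\<lambda>u. X (max 0 u)) -` {0} \<inter> {0<..}" by auto
    then have "?Z \<in> sets borel"
      using mX measurable_sets[of "\<lambda>u. X (max 0 u)" borel borel "{0}"]
      by (auto simp: path_measurable_def)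
    then have "?Z \<in> null_sets lebesgue"
      using null by (auto intro: null_sets_completionI simp: null_sets_def)
    then have "negligible (insert 0 ?Z)" by (simp add: negligible_iff_null_sets[symmetric])
    then have "integral {0..S} ?g = integral {0..S} (\<lambda>u. 0::real)"
      by (rule integral_spike) auto
    then show ?thesis by simp
  qed
  ultimately have "\<forall>\<^sub>F k in sequentially. integral {0..S} (?f k) < \<eta>"
    using \<eta> by (simp add: order_tendstoD(2))
  then obtain k where "integral {0..S} (?f k) < \<eta>"
    by (auto simp: eventually_sequentially)
  moreover have "0 < 1 / real (Suc k)" by simp
  ultimately show ?thesis by blast
qed

lemma occ_inv_squeeze:
  assumes X: "path_measurable X" and Y: "path_measurable Y" and "0 \<le> S"
    and close: "\<And>s. s \<in> {0..S} \<Longrightarrow> \<bar>occupation Y s - occupation X s\<bar> \<le> \<eta>"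
    and reach: "t + \<eta> \<le> occupation X S"
  shows "occ_inv X (t - \<eta>) \<le> occ_inv Y t" "occ_inv Y t \<le> occ_inv X (t + \<eta>)"
proof -
  have "0 \<le> \<eta>" using close[of 0] \<open>0 \<le> S\<close> by simp
  define q where "q = occ_inv X (t + \<eta>)"
  have q: "0 \<le> q" "q \<le> S" "t + \<eta> \<le> occupation X q"
    using occ_inv_mem[OF X \<open>0 \<le> S\<close> reach] occ_inv_le_reached[OF X \<open>0 \<le> S\<close> reach]
    unfolding q_def by auto
  then have "t \<le> occupation Y q" using close[of q] by auto
  then show "occ_inv Y t \<le> q" using q(1) by (rule occ_inv_le[rotated])
  have reachY: "t \<le> occupation Y S" using close[of S] reach \<open>0 \<le> S\<close> by auto
  define \<tau> where "\<tau> = occ_inv Y t"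
  have \<tau>: "0 \<le> \<tau>" "\<tau> \<le> S" "t \<le> occupation Y \<tau>"
    using occ_inv_mem[OF Y \<open>0 \<le> S\<close> reachY] occ_inv_le_reached[OF Y \<open>0 \<le> S\<close> reachY]
    unfolding \<tau>_def by auto
  then have "t - \<eta> \<le> occupation X \<tau>" using close[of \<tau>] by auto
  then show "occ_inv X (t - \<eta>) \<le> \<tau>" using \<tau>(1) by (rule occ_inv_le[rotated])
qed

text \<open>A value X u \<ge> e would keep X nonnegative on a stretch of length r/2 inside
  [p, q], adding r/2 to the occupation time.\<close>

lemma less_on_short_occupation:
  assumes X: "path_measurable X"
    and modulus: "\<And>u v. u \<in> {0..S} \<Longrightarrow> v \<in> {0..S} \<Longrightarrow> \<bar>u - v\<bar> < r \<Longrightarrow> \<bar>X u - X v\<bar> < e"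
    and pq: "0 \<le> p" "q \<le> S" "r \<le> q - p" and "0 < r"
    and short: "occupation X q - occupation X p < r / 2"
    and u: "u \<in> {p..q}"
  shows "X u < e"
proof (rule ccontr)
  assume "\<not> X u < e"
  obtain c d where cd: "p \<le> c" "c \<le> u" "u \<le> d" "d \<le> q" "d - c = r / 2"
  proof (cases "r / 2 \<le> u - p")
    case True then show ?thesis using that[of "u - r / 2" u] u \<open>0 < r\<close> by auto
  next
    case False then show ?thesis using that[of u "u + r / 2"] u pq by auto
  qed
  have "0 \<le> X v" if "v \<in> {c..d}" for v
  proof -
    have "\<bar>v - u\<bar> < r" using that cd \<open>0 < r\<close> by auto
    then show ?thesis using modulus[of v u] that cd pq \<open>\<not> X u < e\<close> by auto
  qed
  then have "d - c \<le> occupation X q - occupation X p"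
    using cd pq by (intro occupation_ge_length[OF X]) auto
  then show False using cd short by simp
qed

lemma occupation_occ_inv_window:
  assumes X: "path_measurable X" and "0 \<le> S" "0 \<le> t" "0 \<le> \<eta>" and reach: "t + \<eta> \<le> occupation X S"
  shows "0 \<le> occ_inv X (t - \<eta>)" "occ_inv X (t + \<eta>) \<le> S"
    "occupation X (occ_inv X (t + \<eta>)) - occupation X (occ_inv X (t - \<eta>)) \<le> 2 * \<eta>"
proof -
  have reach': "t - \<eta> \<le> occupation X S" using reach \<open>0 \<le> \<eta>\<close> by simp
  show "0 \<le> occ_inv X (t - \<eta>)" by (rule occ_inv_nonneg[OF X \<open>0 \<le> S\<close> reach'])
  show "occ_inv X (t + \<eta>) \<le> S" by (rule occ_inv_le_reached[OF X \<open>0 \<le> S\<close> reach])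
  show "occupation X (occ_inv X (t + \<eta>)) - occupation X (occ_inv X (t - \<eta>)) \<le> 2 * \<eta>"
    using occupation_occ_inv_le[OF X \<open>0 \<le> S\<close> reach] occupation_occ_inv_ge[OF X \<open>0 \<le> S\<close> reach']
      \<open>0 \<le> t\<close> \<open>0 \<le> \<eta>\<close> by simp
qed

text \<open>Both inverse times lie between p = occ_inv X (t - \<eta>) and
  q = occ_inv X (t + \<eta>). If q - p is small, continuity of X applies; otherwise X stays below
  \<epsilon>/2 on [p, q], while at the inverse times it is at least 0 and -\<delta>, respectively.\<close>

lemma gmap_close_at:
  assumes X: "continuous_on {0..} X" and Y: "path_measurable Y" and "0 \<le> S"
    and modulus: "\<And>u v. u \<in> {0..S} \<Longrightarrow> v \<in> {0..S} \<Longrightarrow> \<bar>u - v\<bar> < r \<Longrightarrow> \<bar>X u - X v\<bar> < \<epsilon> / 2"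
    and \<eta>: "0 < \<eta>" "\<eta> \<le> r / 8" and \<delta>: "\<delta> \<le> \<epsilon> / 4"
    and close: "\<And>s. s \<in> {0..S} \<Longrightarrow> \<bar>X s - Y s\<bar> < \<delta>"
    and close_occ: "\<And>s. s \<in> {0..S} \<Longrightarrow> \<bar>occupation Y s - occupation X s\<bar> \<le> \<eta>"
    and t: "0 \<le> t" "t + \<eta> \<le> occupation X S"
  shows "\<bar>gmap X t - gmap Y t\<bar> < \<epsilon>"
proof -
  have mX: "path_measurable X" by (rule path_measurable_continuous[OF X])
  have reachX: "t \<le> occupation X S" using t \<eta> by simp
  have reachY: "t \<le> occupation Y S" using close_occ[of S] t \<open>0 \<le> S\<close> by auto
  define p q where "p = occ_inv X (t - \<eta>)" and "q = occ_inv X (t + \<eta>)"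
  have window: "0 \<le> p" "q \<le> S" "occupation X q - occupation X p \<le> 2 * \<eta>"
    using occupation_occ_inv_window[OF mX \<open>0 \<le> S\<close> t(1) _ t(2)] \<eta> unfolding p_def q_def by auto
  define \<tau>X \<tau>Y where "\<tau>X = occ_inv X t" and "\<tau>Y = occ_inv Y t"
  have gmaps: "gmap X t = X \<tau>X" "gmap Y t = Y \<tau>Y"
    using gmap_eq_reached[OF mX \<open>0 \<le> S\<close> reachX] gmap_eq_reached[OF Y \<open>0 \<le> S\<close> reachY]
    unfolding \<tau>X_def \<tau>Y_def by auto
  have \<tau>: "p \<le> \<tau>X" "\<tau>X \<le> q" "p \<le> \<tau>Y" "\<tau>Y \<le> q"
    using occ_inv_squeeze[OF mX mX \<open>0 \<le> S\<close> _ t(2)] occ_inv_squeeze[OF mX Y \<open>0 \<le> S\<close> close_occ t(2)] \<eta>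
    unfolding p_def q_def \<tau>X_def \<tau>Y_def by auto
  then have in_S: "\<tau>X \<in> {0..S}" "\<tau>Y \<in> {0..S}" using window by auto
  have Y_near: "\<bar>X \<tau>Y - Y \<tau>Y\<bar> < \<delta>" using close in_S by simp
  show ?thesis
  proof (cases "q - p < r")
    case True
    then have "\<bar>X \<tau>Y - X \<tau>X\<bar> < \<epsilon> / 2" using modulus in_S \<tau> by auto
    then show ?thesis using gmaps Y_near \<delta> by linarith
  next
    case False
    then have "X u < \<epsilon> / 2" if "u \<in> {p..q}" for u
      using less_on_short_occupation[OF mX modulus window(1,2)] window(3) \<eta> that by auto
    then have upper: "X \<tau>X < \<epsilon> / 2" "X \<tau>Y < \<epsilon> / 2" using \<tau> by auto
    show ?thesis
    proof (cases "t = 0")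
      case True
      then have "\<tau>X = 0" "\<tau>Y = 0"
        using occ_inv_le[of 0 t X] occ_inv_le[of 0 t Y] in_S unfolding \<tau>X_def \<tau>Y_def by auto
      then show ?thesis using gmaps Y_near \<delta> by auto
    next
      case False
      then have "0 < t" using t by simp
      have "- 0 \<le> X \<tau>X"
        unfolding \<tau>X_def by (rule ge_at_occ_inv[OF X mX \<open>0 < t\<close> \<open>0 \<le> S\<close> reachX]) simp
      moreover have "- \<delta> \<le> X \<tau>Y"
        unfolding \<tau>Y_def
      proof (rule ge_at_occ_inv[OF X Y \<open>0 < t\<close> \<open>0 \<le> S\<close> reachY])
        fix u assume "0 \<le> u" "u \<le> occ_inv Y t" "X u < - \<delta>"
        then show "Y u < 0" using close[of u] in_S unfolding \<tau>Y_def by auto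
      qed
      ultimately show ?thesis using upper gmaps Y_near \<delta> by auto
    qed
  qed
qed

lemma gmap_locally_uniformly_close:
  fixes X :: "real \<Rightarrow> real"
  assumes X: "continuous_on {0..} X" and null: "emeasure lborel {u. 0 < u \<and> X u = 0} = 0"
    and unbounded: "\<And>c. \<exists>s\<ge>0. c \<le> occupation X s" and "0 < \<epsilon>"
  shows "\<exists>S \<delta>. 0 \<le> S \<and> 0 < \<delta> \<and> (\<forall>Y. path_measurable Y \<and> (\<forall>s\<in>{0..S}. \<bar>X s - Y s\<bar> < \<delta>) \<longrightarrow>
           (\<forall>t\<in>{0..N}. \<bar>gmap X t - gmap Y t\<bar> < \<epsilon>))"
proof -
  have mX: "path_measurable X" by (rule path_measurable_continuous[OF X])
  obtain S where S: "0 \<le> S" "N + 1 \<le> occupation X S" using unbounded by blast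
  have "uniformly_continuous_on {0..S} X"
    using X by (intro compact_uniformly_continuous) (auto intro: continuous_on_subset)
  then obtain r where r: "0 < r"
    "\<And>u v. u \<in> {0..S} \<Longrightarrow> v \<in> {0..S} \<Longrightarrow> \<bar>u - v\<bar> < r \<Longrightarrow> \<bar>X u - X v\<bar> < \<epsilon> / 2"
    using \<open>0 < \<epsilon>\<close> unfolding uniformly_continuous_on_def dist_real_def
    by (metis half_gt_zero_iff)
  define \<eta> where "\<eta> = min (r / 8) 1"
  have \<eta>: "0 < \<eta>" "\<eta> \<le> r / 8" "\<eta> \<le> 1" using r(1) unfolding \<eta>_def by auto
  obtain \<delta>\<^sub>0 where \<delta>\<^sub>0: "0 < \<delta>\<^sub>0" "integral {0..S} (\<lambda>u. if \<bar>X u\<bar> < \<delta>\<^sub>0 then 1 else 0) < \<eta>"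
    using time_near_zero_small[OF X null \<eta>(1)] by blast
  define \<delta> where "\<delta> = min \<delta>\<^sub>0 (\<epsilon> / 4)"
  have \<delta>: "0 < \<delta>" "\<delta> \<le> \<delta>\<^sub>0" "\<delta> \<le> \<epsilon> / 4" using \<delta>\<^sub>0(1) \<open>0 < \<epsilon>\<close> unfolding \<delta>_def by auto
  have "\<bar>gmap X t - gmap Y t\<bar> < \<epsilon>"
    if Y: "path_measurable Y" and close: "\<forall>s\<in>{0..S}. \<bar>X s - Y s\<bar> < \<delta>" and t: "t \<in> {0..N}" for Y t
  proof (rule gmap_close_at[OF X Y S(1) r(2) \<eta>(1,2) \<delta>(3)])
    fix s assume s: "s \<in> {0..S}"
    have "\<bar>X u - Y u\<bar> < \<delta>\<^sub>0" if "u \<in> {0..s}" for u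
    proof -
      have "u \<in> {0..S}" using that s by auto
      then show ?thesis using close \<delta>(2) by fastforce
    qed
    then have "\<bar>occupation Y s - occupation X s\<bar> \<le> integral {0..s} (\<lambda>u. if \<bar>X u\<bar> < \<delta>\<^sub>0 then 1 else 0)"
      by (rule occupation_close[OF mX Y])
    also have "\<dots> \<le> integral {0..S} (\<lambda>u. if \<bar>X u\<bar> < \<delta>\<^sub>0 then 1 else 0)"
      using s integrable_on_level_indicator[OF mX, of "{x. \<bar>x\<bar> < \<delta>\<^sub>0}" 0]
      by (intro integral_subset_le) (auto simp: borel_open open_Collect_less continuous_intros)
    finally show "\<bar>occupation Y s - occupation X s\<bar> \<le> \<eta>" using \<delta>\<^sub>0(2) by simp
  qed (use close t S \<eta> in auto)
  then show ?thesis using S(1) \<delta>(1) by blast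
qed

section \<open>The Skorokhod distance\<close>

lemma id_in_Lambda: "(\<lambda>x. x) \<in> Lambda T"
  unfolding Lambda_def by (auto intro: continuous_on_id strict_mono_onI simp: bij_betw_def)

lemma skor_d_nonneg: "0 \<le> T \<Longrightarrow> 0 \<le> skor_d T X Y"
  unfolding skor_d_def
proof (rule INF_greatest)
  fix l :: "real \<Rightarrow> real" assume "0 \<le> T"
  have "ereal 0 \<le> ereal \<bar>0 - l 0\<bar>" by simp
  also have "\<dots> \<le> (SUP t\<in>{0..T}. ereal \<bar>t - l t\<bar>)" by (rule SUP_upper) (use \<open>0 \<le> T\<close> in simp)
  finally show "0 \<le> max (SUP t\<in>{0..T}. ereal \<bar>t - l t\<bar>) (SUP t\<in>{0..T}. ereal \<bar>X t - Y (l t)\<bar>)"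
    by (simp add: zero_ereal_def max.coboundedI1)
qed

lemma skor_d_less_time_change:
  assumes "skor_d T X Y < ereal \<delta>"
  obtains l where "l \<in> Lambda T" "\<And>t. t \<in> {0..T} \<Longrightarrow> \<bar>t - l t\<bar> < \<delta>"
    "\<And>t. t \<in> {0..T} \<Longrightarrow> \<bar>X t - Y (l t)\<bar> < \<delta>"
proof -
  obtain l where l: "l \<in> Lambda T"
    "(SUP t\<in>{0..T}. ereal \<bar>t - l t\<bar>) < ereal \<delta>" "(SUP t\<in>{0..T}. ereal \<bar>X t - Y (l t)\<bar>) < ereal \<delta>"
    using assms unfolding skor_d_def INF_less_iff by auto
  have "\<bar>t - l t\<bar> < \<delta>" "\<bar>X t - Y (l t)\<bar> < \<delta>" if "t \<in> {0..T}" for t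
    using le_less_trans[OF SUP_upper[OF that] l(2)] le_less_trans[OF SUP_upper[OF that] l(3)] by auto
  with l(1) that show ?thesis by blast
qed

lemma skor_d_le_uniform:
  assumes "0 \<le> c" "\<And>t. t \<in> {0..T} \<Longrightarrow> \<bar>X t - Y t\<bar> \<le> c"
  shows "skor_d T X Y \<le> ereal c"
proof -
  have "skor_d T X Y \<le> max (SUP t\<in>{0..T}. ereal \<bar>t - t\<bar>) (SUP t\<in>{0..T}. ereal \<bar>X t - Y t\<bar>)"
    unfolding skor_d_def by (rule INF_lower[OF id_in_Lambda])
  also have "\<dots> \<le> ereal c"
    using assms by (intro max.boundedI SUP_least) auto
  finally show ?thesis .
qed

lemma cutoff_bounds: "0 \<le> t \<Longrightarrow> t \<le> m \<Longrightarrow> 0 \<le> cutoff m t \<and> cutoff m t \<le> 2"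
  unfolding cutoff_def by auto

lemma cutoff_eq_1: "t < m - 1 \<Longrightarrow> cutoff m t = 1"
  unfolding cutoff_def by auto

definition skor_term :: "(real \<Rightarrow> real) \<Rightarrow> (real \<Rightarrow> real) \<Rightarrow> nat \<Rightarrow> real" where
  "skor_term X Y n = (1/2) ^ Suc n *
     real_of_ereal (min 1 (skor_d (real (Suc n)) (psi (real (Suc n)) X) (psi (real (Suc n)) Y)))"

lemma skor_dinf_eq_suminf: "skor_dinf X Y = suminf (skor_term X Y)"
  unfolding skor_dinf_def skor_term_def by simp

lemma real_of_ereal_min_1_bounds:
  "0 \<le> (x::ereal) \<Longrightarrow> 0 \<le> real_of_ereal (min 1 x) \<and> real_of_ereal (min 1 x) \<le> 1"
  by (cases x) (auto simp: min_def)

lemma skor_term_bounds: "0 \<le> skor_term X Y n \<and> skor_term X Y n \<le> (1/2) ^ Suc n"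
  using real_of_ereal_min_1_bounds[OF skor_d_nonneg[of "real (Suc n)"]]
  unfolding skor_term_def by (simp add: mult_left_le)

lemma summable_skor_term: "summable (skor_term X Y)"
  by (rule summable_comparison_test[OF _ sums_summable[OF power_half_series]])
     (use skor_term_bounds in auto)

lemma skor_term_le_skor_dinf: "skor_term X Y n \<le> skor_dinf X Y"
proof -
  have "skor_term X Y n \<le> sum (skor_term X Y) {n}" by simp
  also have "\<dots> \<le> suminf (skor_term X Y)"
    by (rule sum_le_suminf[OF summable_skor_term]) (auto simp: skor_term_bounds)
  finally show ?thesis by (simp add: skor_dinf_eq_suminf)
qed

lemma skor_term_le:
  assumes "skor_d (real (Suc n)) (psi (real (Suc n)) X) (psi (real (Suc n)) Y) \<le> ereal c" "0 \<le> c"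
  shows "skor_term X Y n \<le> (1/2) ^ Suc n * c"
proof -
  have "real_of_ereal (min 1 (skor_d (real (Suc n)) (psi (real (Suc n)) X) (psi (real (Suc n)) Y))) \<le> c"
    using assms skor_d_nonneg[of "real (Suc n)" "psi (real (Suc n)) X" "psi (real (Suc n)) Y"]
    by (cases "skor_d (real (Suc n)) (psi (real (Suc n)) X) (psi (real (Suc n)) Y)") (auto simp: min_def)
  then show ?thesis unfolding skor_term_def by (simp add: mult_left_mono)
qed

lemma skor_d_less_of_skor_dinf_less:
  assumes "skor_dinf X Y < (1/2) ^ Suc n * \<delta>" "\<delta> \<le> 1"
  shows "skor_d (real (Suc n)) (psi (real (Suc n)) X) (psi (real (Suc n)) Y) < ereal \<delta>"
    (is "?D < _")
proof -
  have "0 \<le> ?D" by (rule skor_d_nonneg) simp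
  moreover have "(1/2) ^ Suc n * real_of_ereal (min 1 ?D) < (1/2) ^ Suc n * \<delta>"
    using skor_term_le_skor_dinf[of X Y n] assms(1) unfolding skor_term_def by linarith
  then have "real_of_ereal (min 1 ?D) < \<delta>" by (simp add: mult_less_cancel_left)
  ultimately show ?thesis using assms(2) by (cases ?D) (auto simp: min_def split: if_splits)
qed

text \<open>The time changes move points by less than \<delta>, which uniform continuity of
  X absorbs.\<close>

lemma skor_dinf_locally_uniform:
  assumes X: "continuous_on {0..} X" and "0 < \<epsilon>"
  shows "\<exists>d>0. \<forall>Y. skor_dinf X Y < d \<longrightarrow> (\<forall>s\<in>{0..S}. \<bar>X s - Y s\<bar> < \<epsilon>)"
proof -
  define n where "n = nat \<lceil>S\<rceil> + 1"
  define T where "T = real (Suc n)"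
  have ST: "S + 2 \<le> T" unfolding T_def n_def by linarith
  have "uniformly_continuous_on {0..T} X"
    using X by (intro compact_uniformly_continuous) (auto intro: continuous_on_subset)
  then obtain \<rho> where \<rho>: "0 < \<rho>"
    "\<And>u v. u \<in> {0..T} \<Longrightarrow> v \<in> {0..T} \<Longrightarrow> \<bar>u - v\<bar> < \<rho> \<Longrightarrow> \<bar>X u - X v\<bar> < \<epsilon> / 2"
    using \<open>0 < \<epsilon>\<close> unfolding uniformly_continuous_on_def dist_real_def
    by (metis half_gt_zero_iff)
  define \<delta> where "\<delta> = min (min \<rho> (\<epsilon> / 2)) (1 / 2)"
  have \<delta>: "0 < \<delta>" "\<delta> \<le> \<rho>" "\<delta> \<le> \<epsilon> / 2" "\<delta> \<le> 1 / 2"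
    using \<rho>(1) \<open>0 < \<epsilon>\<close> unfolding \<delta>_def by auto
  have "\<bar>X s - Y s\<bar> < \<epsilon>" if dY: "skor_dinf X Y < (1/2) ^ Suc n * \<delta>" and s: "s \<in> {0..S}" for Y s
  proof -
    have D: "skor_d T (psi T X) (psi T Y) < ereal \<delta>"
      unfolding T_def by (rule skor_d_less_of_skor_dinf_less[OF dY]) (use \<delta> in simp)
    obtain l where l: "l \<in> Lambda T" "\<And>t. t \<in> {0..T} \<Longrightarrow> \<bar>t - l t\<bar> < \<delta>"
      "\<And>t. t \<in> {0..T} \<Longrightarrow> \<bar>psi T X t - psi T Y (l t)\<bar> < \<delta>"
      using skor_d_less_time_change[OF D] by blast
    have "s \<in> l ` {0..T}"
      using l(1) s ST unfolding Lambda_def bij_betw_def by auto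
    then obtain t where t: "t \<in> {0..T}" "l t = s" by blast
    then have "\<bar>t - s\<bar> < \<delta>" using l(2) by fastforce
    then have "t < T - 1" "s < T - 1" using s ST \<delta> by auto
    then have "psi T X t = X t" "psi T Y s = Y s"
      unfolding psi_def by (simp_all add: cutoff_eq_1)
    then have "\<bar>X t - Y s\<bar> < \<delta>" using l(3)[OF t(1)] t(2) by simp
    moreover have "\<bar>X s - X t\<bar> < \<epsilon> / 2"
      using \<rho>(2)[of s t] t(1) s ST \<open>\<bar>t - s\<bar> < \<delta>\<close> \<delta> by auto
    ultimately show ?thesis using \<delta> by linarith
  qed
  moreover have "0 < (1/2::real) ^ Suc n * \<delta>" using \<delta> by simp
  ultimately show ?thesis by blast
qed

lemma skor_d_psi_le_uniform:
  assumes "0 \<le> c" "\<And>t. t \<in> {0..T} \<Longrightarrow> \<bar>F t - G t\<bar> \<le> c"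
  shows "skor_d T (psi T F) (psi T G) \<le> ereal (2 * c)"
proof (rule skor_d_le_uniform)
  fix t assume t: "t \<in> {0..T}"
  have "psi T F t - psi T G t = (F t - G t) * cutoff T t"
    unfolding psi_def by (simp add: algebra_simps)
  then have "\<bar>psi T F t - psi T G t\<bar> = \<bar>F t - G t\<bar> * cutoff T t"
    using cutoff_bounds[of t T] t by (simp add: abs_mult)
  also have "\<dots> \<le> c * 2"
    using assms(2)[OF t] cutoff_bounds[of t T] t by (intro mult_mono) auto
  finally show "\<bar>psi T F t - psi T G t\<bar> \<le> 2 * c" by simp
qed (use assms(1) in simp)

lemma skor_dinf_le_uniform:
  fixes N :: nat
  assumes "0 \<le> c" and close: "\<And>t. t \<in> {0..real N} \<Longrightarrow> \<bar>F t - G t\<bar> \<le> c"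
  shows "skor_dinf F G \<le> 2 * c + (1/2) ^ N"
proof -
  have head: "skor_term F G k \<le> (1/2) ^ Suc k * (2 * c)" if "k < N" for k
    using assms that by (intro skor_term_le skor_d_psi_le_uniform) auto
  have "skor_dinf F G = (\<Sum>k. skor_term F G (k + N)) + (\<Sum>k<N. skor_term F G k)"
    unfolding skor_dinf_eq_suminf by (rule suminf_split_initial_segment[OF summable_skor_term])
  also have "(\<Sum>k. skor_term F G (k + N)) \<le> (\<Sum>k. (1/2) ^ N * (1/2) ^ Suc k)"
  proof (rule suminf_le)
    show "skor_term F G (k + N) \<le> (1/2) ^ N * (1/2) ^ Suc k" for k
      using skor_term_bounds[of F G "k + N"] by (simp add: power_add mult_ac)
    show "summable (\<lambda>k. skor_term F G (k + N))"
      using summable_skor_term by (simp add: summable_iff_shift)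
    show "summable (\<lambda>k. (1/2::real) ^ N * (1/2) ^ Suc k)"
      by (rule summable_mult[OF sums_summable[OF power_half_series]])
  qed
  also have "(\<Sum>k. (1/2::real) ^ N * (1/2) ^ Suc k) = (1/2) ^ N"
    using sums_unique[OF sums_mult[OF power_half_series, of "(1/2) ^ N"]] by simp
  also have "(\<Sum>k<N. skor_term F G k) \<le> (\<Sum>k<N. (1/2) ^ Suc k) * (2 * c)"
    unfolding sum_distrib_right by (intro sum_mono head) simp
  also have "\<dots> \<le> 1 * (2 * c)"
  proof (rule mult_right_mono)
    have "(\<Sum>k<N. (1/2::real) ^ Suc k) \<le> (\<Sum>k. (1/2) ^ Suc k)"
      by (rule sum_le_suminf[OF sums_summable[OF power_half_series]]) auto
    then show "(\<Sum>k<N. (1/2::real) ^ Suc k) \<le> 1" using sums_unique[OF power_half_series] by simp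
  qed (use \<open>0 \<le> c\<close> in simp)
  finally show ?thesis by simp
qed

lemma not_in_Dg:
  fixes X :: "real \<Rightarrow> real"
  assumes X: "continuous_on {0..} X" and null: "emeasure lborel {u. 0 < u \<and> X u = 0} = 0"
    and unbounded: "\<And>c. \<exists>s\<ge>0. c \<le> occupation X s"
  shows "X \<notin> Dg"
proof -
  have "\<exists>d>0. \<forall>Y. cadlag Y \<and> skor_dinf X Y < d \<longrightarrow> skor_dinf (gmap X) (gmap Y) < e"
    if "0 < e" for e
  proof -
    obtain N :: nat where N: "(1/2::real) ^ N < e / 2"
      using real_arch_pow_inv[of "e / 2" "1/2::real"] \<open>0 < e\<close> by auto
    have "0 < e / 4" using \<open>0 < e\<close> by simp
    then obtain S \<delta> where S\<delta>: "0 < \<delta>" "\<And>Y. path_measurable Y \<Longrightarrow> (\<forall>s\<in>{0..S}. \<bar>X s - Y s\<bar> < \<delta>) \<Longrightarrow>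
        (\<forall>t\<in>{0..real N}. \<bar>gmap X t - gmap Y t\<bar> < e / 4)"
      using gmap_locally_uniformly_close[OF X null unbounded, of "e / 4" "real N"] by blast
    obtain d where d: "0 < d" "\<And>Y. skor_dinf X Y < d \<Longrightarrow> (\<forall>s\<in>{0..S}. \<bar>X s - Y s\<bar> < \<delta>)"
      using skor_dinf_locally_uniform[OF X S\<delta>(1)] by blast
    have "skor_dinf (gmap X) (gmap Y) < e" if "cadlag Y" "skor_dinf X Y < d" for Y
    proof -
      have "\<bar>gmap X t - gmap Y t\<bar> \<le> e / 4" if "t \<in> {0..real N}" for t
        using S\<delta>(2)[OF path_measurable_cadlag d(2)] \<open>cadlag Y\<close> \<open>skor_dinf X Y < d\<close> that
        by (simp add: less_imp_le)
      then have "skor_dinf (gmap X) (gmap Y) \<le> 2 * (e / 4) + (1/2) ^ N"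
        using \<open>0 < e\<close> by (intro skor_dinf_le_uniform) auto
      then show ?thesis using N by simp
    qed
    then show ?thesis using d(1) by blast
  qed
  then show ?thesis unfolding Dg_def by blast
qed

section \<open>Normal distributions\<close>

lemma normal_density_le: "0 < \<sigma> \<Longrightarrow> normal_density 0 \<sigma> x \<le> 1 / \<sigma>"
proof -
  assume "0 < \<sigma>"
  have "sqrt (2 * pi * \<sigma>\<^sup>2) = sqrt (2 * pi) * \<sigma>"
    using \<open>0 < \<sigma>\<close> by (simp add: real_sqrt_mult)
  moreover have "1 \<le> sqrt (2 * pi)" using pi_gt3 by simp
  ultimately have "\<sigma> \<le> sqrt (2 * pi * \<sigma>\<^sup>2)" using \<open>0 < \<sigma>\<close> by simp
  moreover have "exp (- x\<^sup>2 / (2 * \<sigma>\<^sup>2)) \<le> 1" by simp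
  ultimately have "1 / sqrt (2 * pi * \<sigma>\<^sup>2) * exp (- x\<^sup>2 / (2 * \<sigma>\<^sup>2)) \<le> 1 / \<sigma> * 1"
    using \<open>0 < \<sigma>\<close> by (intro mult_mono) (auto intro: divide_left_mono)
  then show ?thesis unfolding normal_density_def by simp
qed

context prob_space
begin

context
  fixes X :: "'a \<Rightarrow> real" and \<sigma> :: real
  assumes X: "distributed M lborel X (\<lambda>x. ennreal (normal_density 0 \<sigma> x))"
begin

lemma normal_distributed_measurable: "X \<in> borel_measurable M"
  using distributed_measurable[OF X] by (simp add: measurable_lborel2)

lemma normal_distributed_emeasure:
  "A \<in> sets borel \<Longrightarrow>
    emeasure M {\<omega>\<in>space M. X \<omega> \<in> A} = (\<integral>\<^sup>+x. ennreal (normal_density 0 \<sigma> x) * indicator A x \<partial>lborel)"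
  using distributed_emeasure[OF X, of A] by (simp add: vimage_def Int_def conj_commute)

lemma normal_distributed_prob_eq_0: "prob {\<omega>\<in>space M. X \<omega> = 0} = 0"
  using normal_distributed_emeasure[of "{0}"] by (simp add: measure_def)

lemma normal_distributed_prob_nonneg:
  assumes "0 < \<sigma>"
  shows "prob {\<omega>\<in>space M. 0 \<le> X \<omega>} = 1/2"
proof -
  have "distributed M lborel (\<lambda>x. 0 + -1 * X x) (\<lambda>x. ennreal (normal_density (0 + -1 * 0) (\<bar>-1\<bar> * \<sigma>) x))"
    by (rule normal_density_affine[OF X assms]) simp
  then have neg: "distributed M lborel (\<lambda>x. - X x) (\<lambda>x. ennreal (normal_density 0 \<sigma> x))" by simp
  have "emeasure M {\<omega>\<in>space M. X \<omega> \<in> {0..}} = emeasure M {\<omega>\<in>space M. - X \<omega> \<in> {0..}}"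
    using normal_distributed_emeasure[of "{0..}"] prob_space.normal_distributed_emeasure[OF
        prob_space_axioms neg, of "{0..}"] by simp
  then have "prob {\<omega>\<in>space M. 0 \<le> X \<omega>} = prob {\<omega>\<in>space M. X \<omega> \<le> 0}"
    by (simp add: measure_def)
  also have "\<dots> = prob ({\<omega>\<in>space M. X \<omega> < 0} \<union> {\<omega>\<in>space M. X \<omega> = 0})"
    by (intro arg_cong[where f=prob]) auto
  also have "\<dots> = prob {\<omega>\<in>space M. X \<omega> < 0}"
    using normal_distributed_measurable normal_distributed_prob_eq_0
    by (subst finite_measure_Union) auto
  finally have "2 * prob {\<omega>\<in>space M. 0 \<le> X \<omega>}
      = prob {\<omega>\<in>space M. X \<omega> < 0} + prob {\<omega>\<in>space M. 0 \<le> X \<omega>}" by simp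
  also have "\<dots> = prob ({\<omega>\<in>space M. X \<omega> < 0} \<union> {\<omega>\<in>space M. 0 \<le> X \<omega>})"
    using normal_distributed_measurable by (subst finite_measure_Union) auto
  also have "{\<omega>\<in>space M. X \<omega> < 0} \<union> {\<omega>\<in>space M. 0 \<le> X \<omega>} = space M" by auto
  finally show ?thesis by (simp add: prob_space)
qed

lemma normal_distributed_prob_interval_le:
  assumes "0 < \<sigma>" "0 \<le> a"
  shows "prob {\<omega>\<in>space M. - a \<le> X \<omega> \<and> X \<omega> < 0} \<le> a / \<sigma>"
proof -
  have "emeasure M {\<omega>\<in>space M. X \<omega> \<in> {-a..<0}} = (\<integral>\<^sup>+x. ennreal (normal_density 0 \<sigma> x) * indicator {-a..<0} x \<partial>lborel)"
    by (rule normal_distributed_emeasure) simp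
  also have "\<dots> \<le> (\<integral>\<^sup>+x. ennreal (1 / \<sigma>) * indicator {-a..<0} x \<partial>lborel)"
    by (intro nn_integral_mono mult_right_mono) (auto intro: ennreal_leI normal_density_le[OF assms(1)])
  also have "\<dots> = ennreal (a / \<sigma>)"
    using assms by (simp add: nn_integral_cmult_indicator ennreal_mult[symmetric])
  finally show ?thesis
    using assms by (simp add: measure_def enn2real_leI)
qed

lemma normal_distributed_prob_tail_le:
  assumes "0 < \<sigma>" "0 < a"
  shows "prob {\<omega>\<in>space M. a < X \<omega>} \<le> \<sigma>\<^sup>2 / a\<^sup>2"
proof -
  note meas = normal_distributed_measurable
  have "integrable lborel (\<lambda>x. normal_density 0 \<sigma> x * (x - 0) ^ 2)"
    by (rule integrable_normal_moment) (use assms in simp)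
  then have "integrable M (\<lambda>x. X x ^ 2)"
    using distributed_integrable[OF X, of "\<lambda>x. x ^ 2"] by simp
  then have "prob {x\<in>space M. a \<le> \<bar>X x - expectation X\<bar>} \<le> variance X / a\<^sup>2"
    by (rule Chebyshev_inequality[OF meas _ assms(2)])
  then have "prob {x\<in>space M. a \<le> \<bar>X x\<bar>} \<le> \<sigma>\<^sup>2 / a\<^sup>2"
    using normal_distributed_expectation[OF assms(1) X] normal_distributed_variance[OF assms(1) X] by simp
  moreover have "prob {\<omega>\<in>space M. a < X \<omega>} \<le> prob {x\<in>space M. a \<le> \<bar>X x\<bar>}"
    by (rule finite_measure_mono) (use meas in auto)
  ultimately show ?thesis by simp
qed

end

end

section \<open>Brownian motion\<close>

lemma nn_integral_emeasure_sections_swap: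
  assumes "sigma_finite_measure M" "sigma_finite_measure N" "A \<in> sets (M \<Otimes>\<^sub>M N)"
  shows "(\<integral>\<^sup>+x. emeasure N (Pair x -` A) \<partial>M) = (\<integral>\<^sup>+y. emeasure M ((\<lambda>x. (x, y)) -` A) \<partial>N)"
  using sigma_finite_measure.emeasure_pair_measure_alt[OF assms(2,3)]
    pair_sigma_finite.emeasure_pair_measure_alt2[OF _ assms(3)] assms(1,2)
  by (simp add: pair_sigma_finite_def)

locale brownian_motion =
  fixes M :: "'a measure" and B :: "'a \<Rightarrow> real \<Rightarrow> real"
  assumes std_brownian_motion: "std_brownian_motion M B"
begin

sublocale prob_space M
  using std_brownian_motion by (simp add: std_brownian_motion_def)

lemma B_measurable: "0 \<le> t \<Longrightarrow> (\<lambda>\<omega>. B \<omega> t) \<in> borel_measurable M"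
  using std_brownian_motion by (simp add: std_brownian_motion_def)

lemma B_0: "\<omega> \<in> space M \<Longrightarrow> B \<omega> 0 = 0"
  using std_brownian_motion by (simp add: std_brownian_motion_def)

lemma continuous_B: "\<omega> \<in> space M \<Longrightarrow> continuous_on {0..} (B \<omega>)"
  using std_brownian_motion by (simp add: std_brownian_motion_def)

lemma increment_distributed:
  "0 \<le> s \<Longrightarrow> s < t \<Longrightarrow>
    distributed M lborel (\<lambda>\<omega>. B \<omega> t - B \<omega> s) (\<lambda>x. ennreal (normal_density 0 (sqrt (t - s)) x))"
  using std_brownian_motion by (simp add: std_brownian_motion_def)

lemma B_distributed:
  assumes "0 < u"
  shows "distributed M lborel (\<lambda>\<omega>. B \<omega> u) (\<lambda>x. ennreal (normal_density 0 (sqrt u) x))"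
proof -
  have "distributed M lborel (\<lambda>\<omega>. B \<omega> u - B \<omega> 0) (\<lambda>x. ennreal (normal_density 0 (sqrt (u - 0)) x))"
    using assms by (intro increment_distributed) auto
  moreover have "distr M lborel (\<lambda>\<omega>. B \<omega> u) = distr M lborel (\<lambda>\<omega>. B \<omega> u - B \<omega> 0)"
    by (rule distr_cong) (simp_all add: B_0)
  moreover have "(\<lambda>\<omega>. B \<omega> u) \<in> measurable M lborel"
    using B_measurable[of u] assms by (simp add: measurable_lborel2)
  ultimately show ?thesis unfolding distributed_def by simp
qed

lemma prob_B_nonneg: "0 < u \<Longrightarrow> prob {\<omega>\<in>space M. 0 \<le> B \<omega> u} = 1/2"
  by (rule normal_distributed_prob_nonneg[OF B_distributed]) simp_all

lemma prob_B_eq_0: "0 < u \<Longrightarrow> prob {\<omega>\<in>space M. B \<omega> u = 0} = 0"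
  by (rule normal_distributed_prob_eq_0[OF B_distributed])

lemma prob_B_increment_indep:
  assumes uv: "0 < u" "u < v" and sets: "A \<in> sets borel" "C \<in> sets borel"
  shows "prob {\<omega>\<in>space M. B \<omega> u \<in> A \<and> B \<omega> v - B \<omega> u \<in> C}
       = prob {\<omega>\<in>space M. B \<omega> u \<in> A} * prob {\<omega>\<in>space M. B \<omega> v - B \<omega> u \<in> C}"
proof -
  define ts :: "nat \<Rightarrow> real" where "ts = (\<lambda>i. if i = 0 then 0 else if i = 1 then u else v)"
  define D where "D = (\<lambda>i::nat. if i = 0 then A else C)"
  have "0 \<le> ts 0 \<and> (\<forall>i<2. ts i < ts (Suc i))"
    using uv unfolding ts_def by (auto simp: less_Suc_eq)
  then have "indep_vars (\<lambda>_. borel) (\<lambda>i \<omega>. B \<omega> (ts (Suc i)) - B \<omega> (ts i)) {..<2}"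
    using std_brownian_motion unfolding std_brownian_motion_def by blast
  then have "prob (\<Inter>i\<in>{..<2}. (\<lambda>\<omega>. B \<omega> (ts (Suc i)) - B \<omega> (ts i)) -` D i \<inter> space M)
      = (\<Prod>i\<in>{..<2}. prob ((\<lambda>\<omega>. B \<omega> (ts (Suc i)) - B \<omega> (ts i)) -` D i \<inter> space M))"
    by (rule indep_varsD_finite) (auto simp: D_def sets lessThan_empty_iff)
  moreover have "{..<2::nat} = {0, 1}" by auto
  ultimately have "prob ({\<omega>\<in>space M. B \<omega> u - B \<omega> 0 \<in> A} \<inter> {\<omega>\<in>space M. B \<omega> v - B \<omega> u \<in> C})
      = prob {\<omega>\<in>space M. B \<omega> u - B \<omega> 0 \<in> A} * prob {\<omega>\<in>space M. B \<omega> v - B \<omega> u \<in> C}"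
    by (simp add: ts_def D_def vimage_def Int_def conj_commute)
  moreover have "{\<omega>\<in>space M. B \<omega> u - B \<omega> 0 \<in> A} = {\<omega>\<in>space M. B \<omega> u \<in> A}"
    by (auto simp: B_0)
  moreover have "{\<omega>\<in>space M. B \<omega> u \<in> A} \<inter> {\<omega>\<in>space M. B \<omega> v - B \<omega> u \<in> C}
      = {\<omega>\<in>space M. B \<omega> u \<in> A \<and> B \<omega> v - B \<omega> u \<in> C}" by auto
  ultimately show ?thesis by simp
qed

text \<open>Unless B \<omega> u exceeds a, both values can only be nonnegative if B \<omega> u \<ge> 0
  and the independent increment B \<omega> v - B \<omega> u is at least -a.\<close>

lemma prob_B_both_nonneg_le:
  assumes uv: "0 < u" "u < v" and "0 < a"
  shows "prob {\<omega>\<in>space M. 0 \<le> B \<omega> u \<and> 0 \<le> B \<omega> v} \<le> 1/4 + a / sqrt (v - u) + u / a\<^sup>2"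
proof -
  have inc: "distributed M lborel (\<lambda>\<omega>. B \<omega> v - B \<omega> u) (\<lambda>x. ennreal (normal_density 0 (sqrt (v - u)) x))"
    using uv by (intro increment_distributed) auto
  note [measurable] = normal_distributed_measurable[OF B_distributed[OF uv(1)]]
    normal_distributed_measurable[OF inc]
  have "sqrt (v - u) > 0" using uv by simp
  have "prob {\<omega>\<in>space M. 0 \<le> B \<omega> u \<and> 0 \<le> B \<omega> v}
      \<le> prob ({\<omega>\<in>space M. B \<omega> u \<in> {0..} \<and> B \<omega> v - B \<omega> u \<in> {-a..}} \<union> {\<omega>\<in>space M. a < B \<omega> u})"
    by (rule finite_measure_mono) auto
  also have "\<dots> \<le> prob {\<omega>\<in>space M. B \<omega> u \<in> {0..} \<and> B \<omega> v - B \<omega> u \<in> {-a..}} + prob {\<omega>\<in>space M. a < B \<omega> u}"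
    by (rule measure_subadditive) measurable
  also have "prob {\<omega>\<in>space M. B \<omega> u \<in> {0..} \<and> B \<omega> v - B \<omega> u \<in> {-a..}}
      = prob {\<omega>\<in>space M. B \<omega> u \<in> {0..}} * prob {\<omega>\<in>space M. B \<omega> v - B \<omega> u \<in> {-a..}}"
    by (rule prob_B_increment_indep[OF uv]) auto
  also have "prob {\<omega>\<in>space M. B \<omega> u \<in> {0..}} = 1/2" using prob_B_nonneg[OF uv(1)] by simp
  also have "prob {\<omega>\<in>space M. B \<omega> v - B \<omega> u \<in> {-a..}} \<le> 1/2 + a / sqrt (v - u)"
  proof -
    have "{\<omega>\<in>space M. B \<omega> v - B \<omega> u \<in> {-a..}} = {\<omega>\<in>space M. 0 \<le> B \<omega> v - B \<omega> u}
        \<union> {\<omega>\<in>space M. - a \<le> B \<omega> v - B \<omega> u \<and> B \<omega> v - B \<omega> u < 0}"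
      using \<open>0 < a\<close> by auto
    then have "prob {\<omega>\<in>space M. B \<omega> v - B \<omega> u \<in> {-a..}}
        \<le> prob {\<omega>\<in>space M. 0 \<le> B \<omega> v - B \<omega> u}
          + prob {\<omega>\<in>space M. - a \<le> B \<omega> v - B \<omega> u \<and> B \<omega> v - B \<omega> u < 0}"
      by (simp only:) (rule measure_subadditive; measurable)
    then show ?thesis
      using normal_distributed_prob_nonneg[OF inc \<open>sqrt (v - u) > 0\<close>]
        normal_distributed_prob_interval_le[OF inc \<open>sqrt (v - u) > 0\<close>, of a] \<open>0 < a\<close> by simp
  qed
  also have "prob {\<omega>\<in>space M. a < B \<omega> u} \<le> u / a\<^sup>2"
    using normal_distributed_prob_tail_le[OF B_distributed[OF uv(1)] _ \<open>0 < a\<close>] uv by simp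
  finally have "prob {\<omega>\<in>space M. 0 \<le> B \<omega> u \<and> 0 \<le> B \<omega> v}
      \<le> 1/2 * (1/2 + a / sqrt (v - u)) + u / a\<^sup>2" by simp
  moreover have "0 \<le> a / sqrt (v - u)" using \<open>0 < a\<close> \<open>sqrt (v - u) > 0\<close> by simp
  ultimately show ?thesis by (simp add: ring_distribs)
qed

lemma measurable_B_joint: "(\<lambda>p. B (fst p) (max 0 (snd p))) \<in> borel_measurable (M \<Otimes>\<^sub>M lborel)"
proof (rule borel_measurable_right_continuous_process)
  fix \<omega> and t :: real assume "\<omega> \<in> space M" "0 \<le> t"
  then have "(B \<omega> \<longlongrightarrow> B \<omega> t) (at t within {0..})"
    using continuous_B unfolding continuous_on_def by simp
  then show "(B \<omega> \<longlongrightarrow> B \<omega> t) (at_right t)"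
    by (rule tendsto_within_subset) (use \<open>0 \<le> t\<close> in auto)
qed (rule B_measurable)

lemma measurable_B_comp [measurable]:
  assumes "f \<in> N \<rightarrow>\<^sub>M M" "g \<in> borel_measurable N"
  shows "(\<lambda>x. B (f x) (max 0 (g x))) \<in> borel_measurable N"
proof -
  have "(\<lambda>x. (f x, g x)) \<in> N \<rightarrow>\<^sub>M M \<Otimes>\<^sub>M lborel"
    using assms by (auto intro: measurable_Pair simp: measurable_lborel2)
  from measurable_compose[OF this measurable_B_joint] show ?thesis by simp
qed

lemma AE_zero_set_null: "AE \<omega> in M. emeasure lborel {u. 0 < u \<and> B \<omega> u = 0} = 0"
proof -
  define A where "A = {p \<in> space (M \<Otimes>\<^sub>M lborel). 0 < snd p \<and> B (fst p) (max 0 (snd p)) = 0}"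
  have A: "A \<in> sets (M \<Otimes>\<^sub>M lborel)" unfolding A_def by measurable
  have "emeasure M ((\<lambda>\<omega>. (\<omega>, u)) -` A) = 0" for u :: real
  proof (cases "0 < u")
    case True
    then have "(\<lambda>\<omega>. (\<omega>, u)) -` A = {\<omega>\<in>space M. B \<omega> u = 0}"
      unfolding A_def by (auto simp: space_pair_measure)
    then show ?thesis using prob_B_eq_0[OF True] by (simp add: emeasure_eq_measure)
  qed (auto simp: A_def)
  then have "(\<integral>\<^sup>+\<omega>. emeasure lborel (Pair \<omega> -` A) \<partial>M) = 0"
    using nn_integral_emeasure_sections_swap[OF sigma_finite_measure_axioms sigma_finite_lborel A]
    by simp
  then have "AE \<omega> in M. emeasure lborel (Pair \<omega> -` A) = 0"
    by (subst nn_integral_0_iff_AE[OF lborel.measurable_emeasure_Pair[OF A], symmetric])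
  then show ?thesis
    using AE_space
  proof eventually_elim
    case (elim \<omega>)
    then have "Pair \<omega> -` A = {u. 0 < u \<and> B \<omega> u = 0}"
      unfolding A_def by (auto simp: space_pair_measure)
    then show ?case using elim(1) by simp
  qed
qed

end

section \<open>Unbounded occupation time of Brownian motion\<close>

text \<open>For u in block j and v in a later block k we get u * 8^k \<le> v - u
  (block_separated), so the sign of B at v is nearly independent of its sign at u.\<close>

primrec block_start :: "nat \<Rightarrow> real" where
  "block_start 0 = 1"
| "block_start (Suc k) = 4 * 8 ^ Suc k * (block_start k + 1)"

definition block :: "nat \<Rightarrow> real set" where
  "block k = {block_start k..block_start k + 1}"

lemma block_start_ge_1: "1 \<le> block_start k"
proof (induction k)
  case (Suc k)
  have "1 \<le> (4::real) * 8 ^ Suc k" using one_le_power[of "8::real" "Suc k"] by linarith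
  then have "1 * 1 \<le> 4 * 8 ^ Suc k * (block_start k + 1)"
    using Suc by (intro mult_mono) auto
  then show ?case by simp
qed simp

lemma block_start_step: "block_start k + 1 \<le> block_start (Suc k)"
proof -
  have "1 \<le> (4::real) * 8 ^ Suc k" using one_le_power[of "8::real" "Suc k"] by linarith
  then have "1 * (block_start k + 1) \<le> 4 * 8 ^ Suc k * (block_start k + 1)"
    using block_start_ge_1[of k] by (intro mult_right_mono) auto
  then show ?thesis by simp
qed

lemma block_ge_1: "u \<in> block k \<Longrightarrow> 1 \<le> u"
  using block_start_ge_1[of k] unfolding block_def by auto

lemma max_0_block: "u \<in> block k \<Longrightarrow> max 0 u = u"
  using block_ge_1[of u k] by simp

lemma emeasure_block: "emeasure lborel (block k) = 1"
  unfolding block_def by simp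

lemma block_start_mono:
  assumes "j \<le> k"
  shows "block_start j \<le> block_start k"
proof -
  have "block_start n \<le> block_start (Suc n)" for n
    using block_start_step[of n] by linarith
  then show ?thesis using assms by (rule lift_Suc_mono_le)
qed

lemma block_separated:
  assumes "j < k" and u: "u \<in> block j" and v: "v \<in> block k"
  shows "0 < u" "u * 8 ^ k \<le> v - u" "u < v"
proof -
  obtain m where k: "k = Suc m" "j \<le> m" using \<open>j < k\<close> by (cases k) auto
  let ?b = "block_start m + 1"
  have ub: "u \<le> ?b" using u block_start_mono[OF k(2)] unfolding block_def by simp
  have vb: "4 * 8 ^ k * ?b \<le> v" using v k unfolding block_def by simp
  show "0 < u" using block_ge_1[OF u] by simp
  have p: "1 \<le> (8::real) ^ k" by (rule one_le_power) simp
  have "u * 8 ^ k \<le> ?b * 8 ^ k" using ub by (intro mult_right_mono) auto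
  also have "\<dots> \<le> 4 * 8 ^ k * ?b - ?b"
  proof -
    have "1 \<le> 3 * (8::real) ^ k" using p by linarith
    then have "?b * 1 \<le> ?b * (3 * 8 ^ k)"
      using block_start_ge_1[of m] by (intro mult_left_mono) auto
    then show ?thesis by (simp add: algebra_simps)
  qed
  also have "\<dots> \<le> v - u" using vb ub by simp
  finally show "u * 8 ^ k \<le> v - u" .
  moreover have "u * 1 \<le> u * 8 ^ k" using p \<open>0 < u\<close> by (intro mult_left_mono) auto
  ultimately show "u < v" using \<open>0 < u\<close> by linarith
qed

definition block_corr_bound :: "nat \<Rightarrow> nat \<Rightarrow> real" where
  "block_corr_bound j k = 1/4 + (if j = k then 1 else 0) + 2 * (1/2) ^ j + 2 * (1/2) ^ k"

lemma sum_block_corr_bound: "(\<Sum>j<n. \<Sum>k<n. block_corr_bound j k) \<le> real n ^ 2 / 4 + 9 * real n"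
proof -
  let ?G = "\<Sum>i<n. (1/2::real) ^ i"
  have G: "?G \<le> 2"
    using sum_le_suminf[OF summable_geometric[of "1/2::real"], of "{..<n}"] suminf_geometric[of "1/2::real"]
    by simp
  have "(\<Sum>k<n. block_corr_bound j k) = real n / 4 + (if j < n then 1 else 0) + 2 * real n * (1/2) ^ j + 2 * ?G"
    for j
    unfolding block_corr_bound_def by (simp add: sum.distrib sum_distrib_left[symmetric])
  then have "(\<Sum>j<n. \<Sum>k<n. block_corr_bound j k) = real n * real n / 4 + real n + 4 * real n * ?G"
    by (simp add: sum.distrib sum_distrib_left[symmetric] algebra_simps)
  also have "\<dots> \<le> real n * real n / 4 + real n + 4 * real n * 2"
    using G by (intro add_mono mult_left_mono) auto
  finally show ?thesis by (simp add: power2_eq_square)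
qed

context brownian_motion
begin

lemma prob_both_nonneg_blocks_le:
  assumes "j < k" "u \<in> block j" "v \<in> block k"
  shows "prob {\<omega>\<in>space M. 0 \<le> B \<omega> u \<and> 0 \<le> B \<omega> v} \<le> 1/4 + 2 * (1/2) ^ k"
proof -
  note sep = block_separated[OF assms]
  have "0 < v - u" using sep by simp
  define a where "a = sqrt (v - u) / 2 ^ k"
  have "0 < a" using \<open>0 < v - u\<close> unfolding a_def by simp
  have "a / sqrt (v - u) = (1/2) ^ k"
    using \<open>0 < v - u\<close> unfolding a_def by (simp add: power_one_over)
  moreover have "u / a\<^sup>2 \<le> (1/2) ^ k"
  proof -
    have "(8::real) ^ k = 4 ^ k * 2 ^ k" "(2::real) ^ k * 2 ^ k = 4 ^ k"
      by (simp_all add: power_mult_distrib[symmetric])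
    then have sep': "u * 4 ^ k * 2 ^ k \<le> v - u" and a2: "a\<^sup>2 = (v - u) / 4 ^ k"
      using sep(2) \<open>0 < v - u\<close> unfolding a_def by (simp_all add: mult.assoc power_divide power2_eq_square)
    have "u / a\<^sup>2 = u * 4 ^ k / (v - u)"
      unfolding a2 using \<open>0 < v - u\<close> by (simp add: field_simps)
    also have "\<dots> \<le> (1/2) ^ k"
      using sep' \<open>0 < v - u\<close> by (simp add: field_simps power_one_over)
    finally show ?thesis .
  qed
  ultimately show ?thesis
    using prob_B_both_nonneg_le[OF sep(1,3) \<open>0 < a\<close>] by simp
qed

lemma prob_both_nonneg_le_block_corr_bound:
  assumes "u \<in> block j" "v \<in> block k"
  shows "prob {\<omega>\<in>space M. 0 \<le> B \<omega> u \<and> 0 \<le> B \<omega> v} \<le> block_corr_bound j k"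
proof -
  have nonneg: "0 \<le> 2 * (1/2::real) ^ j" "0 \<le> 2 * (1/2::real) ^ k" by simp_all
  consider "j < k" | "k < j" | "j = k" by linarith
  then show ?thesis
  proof cases
    case 1
    then have "block_corr_bound j k = 1/4 + 2 * (1/2) ^ j + 2 * (1/2) ^ k"
      by (simp add: block_corr_bound_def)
    then show ?thesis using prob_both_nonneg_blocks_le[OF 1 assms] nonneg by linarith
  next
    case 2
    then have "block_corr_bound j k = 1/4 + 2 * (1/2) ^ j + 2 * (1/2) ^ k"
      by (simp add: block_corr_bound_def)
    moreover have "prob {\<omega>\<in>space M. 0 \<le> B \<omega> u \<and> 0 \<le> B \<omega> v} \<le> 1/4 + 2 * (1/2) ^ j"
      using prob_both_nonneg_blocks_le[OF 2 assms(2,1)] by (simp add: conj_commute)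
    ultimately show ?thesis using nonneg by linarith
  next
    case 3
    then have "block_corr_bound j k = 5/4 + 2 * (1/2) ^ j + 2 * (1/2) ^ k"
      by (simp add: block_corr_bound_def)
    then show ?thesis
      using prob_le_1[of "{\<omega>\<in>space M. 0 \<le> B \<omega> u \<and> 0 \<le> B \<omega> v}"] nonneg by linarith
  qed
qed

definition block_occupation :: "nat \<Rightarrow> 'a \<Rightarrow> real" where
  "block_occupation k \<omega> = measure lborel {u \<in> block k. 0 \<le> B \<omega> u}"

definition block_nonneg_pairs :: "nat \<Rightarrow> ('a \<times> real) set" where
  "block_nonneg_pairs k = {p \<in> space (M \<Otimes>\<^sub>M lborel). snd p \<in> block k \<and> 0 \<le> B (fst p) (snd p)}"

lemma sets_block_nonneg_pairs: "block_nonneg_pairs k \<in> sets (M \<Otimes>\<^sub>M lborel)"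
proof -
  have "block_nonneg_pairs k =
      {p \<in> space (M \<Otimes>\<^sub>M lborel). snd p \<in> block k \<and> 0 \<le> B (fst p) (max 0 (snd p))}"
    unfolding block_nonneg_pairs_def by (auto simp: max_0_block)
  also have "\<dots> \<in> sets (M \<Otimes>\<^sub>M lborel)" unfolding block_def by measurable
  finally show ?thesis .
qed

lemma block_nonneg_pairs_Pair:
  "\<omega> \<in> space M \<Longrightarrow> Pair \<omega> -` block_nonneg_pairs k = {u \<in> block k. 0 \<le> B \<omega> u}"
  unfolding block_nonneg_pairs_def by (auto simp: space_pair_measure)

lemma sets_block_nonneg: "\<omega> \<in> space M \<Longrightarrow> {u \<in> block k. 0 \<le> B \<omega> u} \<in> sets lborel"
  using sets_Pair1[OF sets_block_nonneg_pairs] block_nonneg_pairs_Pair by metis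

lemma emeasure_block_nonneg_le_1: "emeasure lborel {u \<in> block k. 0 \<le> B \<omega> u} \<le> 1"
proof -
  have "emeasure lborel {u \<in> block k. 0 \<le> B \<omega> u} \<le> emeasure lborel (block k)"
    by (rule emeasure_mono) (auto simp: block_def)
  then show ?thesis by (simp add: emeasure_block)
qed

lemma emeasure_block_nonneg:
  "emeasure lborel {u \<in> block k. 0 \<le> B \<omega> u} = ennreal (block_occupation k \<omega>)"
  unfolding block_occupation_def
  by (rule emeasure_eq_ennreal_measure[OF neq_top_trans[OF ennreal_one_neq_top emeasure_block_nonneg_le_1]])

lemma block_occupation_bounds: "0 \<le> block_occupation k \<omega> \<and> block_occupation k \<omega> \<le> 1"
proof
  show "0 \<le> block_occupation k \<omega>" unfolding block_occupation_def by (rule measure_nonneg)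
  show "block_occupation k \<omega> \<le> 1"
    using emeasure_block_nonneg_le_1[of k \<omega>] by (simp add: emeasure_block_nonneg)
qed

lemma borel_measurable_block_occupation [measurable]: "block_occupation k \<in> borel_measurable M"
proof -
  have "(\<lambda>\<omega>. enn2real (emeasure lborel (Pair \<omega> -` block_nonneg_pairs k))) \<in> borel_measurable M"
    using lborel.measurable_emeasure_Pair[OF sets_block_nonneg_pairs] by measurable
  then show ?thesis
    by (rule measurable_cong[THEN iffD1, rotated])
       (simp add: block_occupation_def block_nonneg_pairs_Pair measure_def)
qed

lemma integrable_block_occupation:
  "integrable M (block_occupation k)" "integrable M (\<lambda>\<omega>. block_occupation j \<omega> * block_occupation k \<omega>)"
proof -
  have "\<bar>block_occupation j \<omega> * block_occupation k \<omega>\<bar> \<le> 1" for \<omega>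
    using block_occupation_bounds[of j \<omega>] block_occupation_bounds[of k \<omega>]
    by (auto simp: abs_mult intro!: mult_le_one)
  then show "integrable M (\<lambda>\<omega>. block_occupation j \<omega> * block_occupation k \<omega>)"
    by (intro integrable_const_bound[where B=1]) auto
  show "integrable M (block_occupation k)"
    using block_occupation_bounds by (intro integrable_const_bound[where B=1]) auto
qed

lemma expectation_block_occupation: "expectation (block_occupation k) = 1/2"
proof -
  have "(\<integral>\<^sup>+\<omega>. ennreal (block_occupation k \<omega>) \<partial>M) = (\<integral>\<^sup>+\<omega>. emeasure lborel (Pair \<omega> -` block_nonneg_pairs k) \<partial>M)"
    by (rule nn_integral_cong) (simp add: emeasure_block_nonneg block_nonneg_pairs_Pair)
  also have "\<dots> = (\<integral>\<^sup>+u. emeasure M ((\<lambda>\<omega>. (\<omega>, u)) -` block_nonneg_pairs k) \<partial>lborel)"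
    by (rule nn_integral_emeasure_sections_swap[OF sigma_finite_measure_axioms sigma_finite_lborel
          sets_block_nonneg_pairs])
  also have "\<dots> = (\<integral>\<^sup>+u. ennreal (1/2) * indicator (block k) u \<partial>lborel)"
  proof (rule nn_integral_cong)
    fix u :: real
    show "emeasure M ((\<lambda>\<omega>. (\<omega>, u)) -` block_nonneg_pairs k) = ennreal (1/2) * indicator (block k) u"
    proof (cases "u \<in> block k")
      case True
      then have "(\<lambda>\<omega>. (\<omega>, u)) -` block_nonneg_pairs k = {\<omega>\<in>space M. 0 \<le> B \<omega> u}"
        unfolding block_nonneg_pairs_def by (auto simp: space_pair_measure)
      moreover have "0 < u" using block_ge_1[OF True] by simp
      ultimately have "emeasure M ((\<lambda>\<omega>. (\<omega>, u)) -` block_nonneg_pairs k) = ennreal (1/2)"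
        by (simp only: emeasure_eq_measure prob_B_nonneg)
      then show ?thesis using True by simp
    qed (auto simp: block_nonneg_pairs_def)
  qed
  also have "\<dots> = ennreal (1/2) * emeasure lborel (block k)"
    by (rule nn_integral_cmult_indicator) (simp add: block_def)
  also have "\<dots> = ennreal (1/2)" by (simp add: emeasure_block)
  finally have nn: "(\<integral>\<^sup>+\<omega>. ennreal (block_occupation k \<omega>) \<partial>M) = ennreal (1/2)" .
  have "expectation (block_occupation k) = enn2real (\<integral>\<^sup>+\<omega>. ennreal (block_occupation k \<omega>) \<partial>M)"
    by (rule integral_eq_nn_integral) (auto simp: block_occupation_bounds)
  also have "\<dots> = 1/2" unfolding nn by (rule enn2real_ennreal) simp
  finally show ?thesis .
qed

lemma expectation_block_occupation_product:
  "expectation (\<lambda>\<omega>. block_occupation j \<omega> * block_occupation k \<omega>) \<le> block_corr_bound j k"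
proof -
  let ?L2 = "lborel \<Otimes>\<^sub>M lborel :: (real \<times> real) measure"
  define A where "A = {p \<in> space (M \<Otimes>\<^sub>M ?L2). fst (snd p) \<in> block j \<and> snd (snd p) \<in> block k \<and>
      0 \<le> B (fst p) (max 0 (fst (snd p))) \<and> 0 \<le> B (fst p) (max 0 (snd (snd p)))}"
  have A: "A \<in> sets (M \<Otimes>\<^sub>M ?L2)" unfolding A_def block_def by measurable
  have L2: "sigma_finite_measure ?L2"
    by (rule sigma_finite_pair_measure[OF sigma_finite_lborel sigma_finite_lborel])
  have "(\<integral>\<^sup>+\<omega>. ennreal (block_occupation j \<omega> * block_occupation k \<omega>) \<partial>M)
      = (\<integral>\<^sup>+\<omega>. emeasure ?L2 (Pair \<omega> -` A) \<partial>M)"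
  proof (rule nn_integral_cong)
    fix \<omega> assume \<omega>: "\<omega> \<in> space M"
    then have "Pair \<omega> -` A = {u \<in> block j. 0 \<le> B \<omega> u} \<times> {v \<in> block k. 0 \<le> B \<omega> v}"
      unfolding A_def by (auto simp: space_pair_measure max_0_block)
    then show "ennreal (block_occupation j \<omega> * block_occupation k \<omega>) = emeasure ?L2 (Pair \<omega> -` A)"
      using lborel.emeasure_pair_measure_Times[OF sets_block_nonneg[OF \<omega>] sets_block_nonneg[OF \<omega>]]
      by (simp add: emeasure_block_nonneg ennreal_mult block_occupation_bounds)
  qed
  also have "\<dots> = (\<integral>\<^sup>+w. emeasure M ((\<lambda>\<omega>. (\<omega>, w)) -` A) \<partial>?L2)"
    by (rule nn_integral_emeasure_sections_swap[OF sigma_finite_measure_axioms L2 A])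
  also have "\<dots> \<le> (\<integral>\<^sup>+w. ennreal (block_corr_bound j k) * indicator (block j \<times> block k) w \<partial>?L2)"
  proof (rule nn_integral_mono)
    fix w :: "real \<times> real"
    show "emeasure M ((\<lambda>\<omega>. (\<omega>, w)) -` A) \<le> ennreal (block_corr_bound j k) * indicator (block j \<times> block k) w"
    proof (cases "w \<in> block j \<times> block k")
      case True
      then have "(\<lambda>\<omega>. (\<omega>, w)) -` A = {\<omega>\<in>space M. 0 \<le> B \<omega> (fst w) \<and> 0 \<le> B \<omega> (snd w)}"
        unfolding A_def by (auto simp: space_pair_measure max_0_block mem_Times_iff)
      then show ?thesis
        using True prob_both_nonneg_le_block_corr_bound[of "fst w" j "snd w" k]
        by (auto simp: emeasure_eq_measure ennreal_leI mem_Times_iff)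
    qed (auto simp: A_def mem_Times_iff)
  qed
  also have "\<dots> = ennreal (block_corr_bound j k) * emeasure ?L2 (block j \<times> block k)"
    by (rule nn_integral_cmult_indicator) (simp add: block_def)
  also have "emeasure ?L2 (block j \<times> block k) = emeasure lborel (block j) * emeasure lborel (block k)"
    by (rule lborel.emeasure_pair_measure_Times) (simp_all add: block_def)
  also have "ennreal (block_corr_bound j k) * (emeasure lborel (block j) * emeasure lborel (block k))
      = ennreal (block_corr_bound j k)" by (simp add: emeasure_block)
  finally have nn: "(\<integral>\<^sup>+\<omega>. ennreal (block_occupation j \<omega> * block_occupation k \<omega>) \<partial>M)
      \<le> ennreal (block_corr_bound j k)" .
  have "expectation (\<lambda>\<omega>. block_occupation j \<omega> * block_occupation k \<omega>)
      = enn2real (\<integral>\<^sup>+\<omega>. ennreal (block_occupation j \<omega> * block_occupation k \<omega>) \<partial>M)"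
    by (rule integral_eq_nn_integral) (auto simp: block_occupation_bounds)
  also have "\<dots> \<le> block_corr_bound j k"
    by (rule enn2real_leI[OF _ nn]) (simp add: block_corr_bound_def)
  finally show ?thesis .
qed

definition block_occupation_sum :: "nat \<Rightarrow> 'a \<Rightarrow> real" where
  "block_occupation_sum n \<omega> = (\<Sum>k<n. block_occupation k \<omega>)"

lemma block_occupation_eq_integral:
  assumes "\<omega> \<in> space M"
  shows "block_occupation k \<omega> = integral (block k) (nonneg_ind (B \<omega>))"
proof -
  have eq: "{u. 0 \<le> B \<omega> u} \<inter> block k = {u \<in> block k. 0 \<le> B \<omega> u}" by auto
  have "{u. 0 \<le> B \<omega> u} \<inter> block k \<in> lmeasurable"
    unfolding eq using sets_block_nonneg[OF assms]
    by (intro bounded_set_imp_lmeasurable)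
       (auto intro: sets_completionI_sets bounded_subset[of "block k"] simp: block_def)
  then have "integral (block k) (indicator {u. 0 \<le> B \<omega> u}) = measure lebesgue {u \<in> block k. 0 \<le> B \<omega> u}"
    unfolding eq[symmetric] by (rule integral_indicator)
  moreover have "nonneg_ind (B \<omega>) = indicator {u. 0 \<le> B \<omega> u}"
    by (auto simp: nonneg_ind_def indicator_def)
  ultimately show ?thesis
    using sets_block_nonneg[OF assms] by (simp add: block_occupation_def)
qed

lemma block_occupation_sum_le_occupation:
  assumes "\<omega> \<in> space M"
  shows "block_occupation_sum n \<omega> \<le> occupation (B \<omega>) (block_start n)"
proof (induction n)
  case 0
  show ?case
    using occupation_mono[OF path_measurable_continuous[OF continuous_B[OF assms]], of 0 1]
    by (simp add: block_occupation_sum_def)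
next
  case (Suc n)
  have W: "path_measurable (B \<omega>)" by (rule path_measurable_continuous[OF continuous_B[OF assms]])
  have "0 \<le> block_start n" using block_start_ge_1[of n] by simp
  then have "block_occupation n \<omega> = occupation (B \<omega>) (block_start n + 1) - occupation (B \<omega>) (block_start n)"
    using occupation_diff[OF W] block_occupation_eq_integral[OF assms] by (simp add: block_def)
  then have "block_occupation_sum (Suc n) \<omega> \<le> occupation (B \<omega>) (block_start n + 1)"
    using Suc by (simp add: block_occupation_sum_def)
  also have "\<dots> \<le> occupation (B \<omega>) (block_start (Suc n))"
    by (rule occupation_mono[OF W block_start_step])
  finally show ?case .
qed

lemma block_occupation_sum_sq:
  "(block_occupation_sum n \<omega>)\<^sup>2 = (\<Sum>j<n. \<Sum>k<n. block_occupation j \<omega> * block_occupation k \<omega>)"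
  unfolding block_occupation_sum_def power2_eq_square by (rule sum_product)

lemma integrable_block_occupation_sum:
  "integrable M (block_occupation_sum n)" "integrable M (\<lambda>\<omega>. (block_occupation_sum n \<omega>)\<^sup>2)"
proof -
  show "integrable M (block_occupation_sum n)"
    unfolding block_occupation_sum_def[abs_def]
    by (intro Bochner_Integration.integrable_sum integrable_block_occupation)
  show "integrable M (\<lambda>\<omega>. (block_occupation_sum n \<omega>)\<^sup>2)"
    unfolding block_occupation_sum_sq
    by (intro Bochner_Integration.integrable_sum integrable_block_occupation)
qed

lemma expectation_block_occupation_sum: "expectation (block_occupation_sum n) = real n / 2"
  unfolding block_occupation_sum_def[abs_def]
  by (subst Bochner_Integration.integral_sum) (simp_all add: integrable_block_occupation expectation_block_occupation)

lemma expectation_block_occupation_sum_sq: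
  "expectation (\<lambda>\<omega>. (block_occupation_sum n \<omega>)\<^sup>2) \<le> real n ^ 2 / 4 + 9 * real n"
proof -
  have "expectation (\<lambda>\<omega>. (block_occupation_sum n \<omega>)\<^sup>2)
      = (\<Sum>j<n. \<Sum>k<n. expectation (\<lambda>\<omega>. block_occupation j \<omega> * block_occupation k \<omega>))"
    unfolding block_occupation_sum_sq
    by (simp add: Bochner_Integration.integral_sum Bochner_Integration.integrable_sum
        integrable_block_occupation)
  also have "\<dots> \<le> (\<Sum>j<n. \<Sum>k<n. block_corr_bound j k)"
    by (intro sum_mono expectation_block_occupation_product)
  also have "\<dots> \<le> real n ^ 2 / 4 + 9 * real n" by (rule sum_block_corr_bound)
  finally show ?thesis .
qed

lemma borel_measurable_block_occupation_sum [measurable]: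
  "block_occupation_sum n \<in> borel_measurable M"
  unfolding block_occupation_sum_def[abs_def] by measurable

lemma prob_block_occupation_sum_small:
  assumes "0 < n"
  shows "prob {\<omega>\<in>space M. block_occupation_sum n \<omega> \<le> real n / 4} \<le> 144 / real n"
proof -
  have var: "variance (block_occupation_sum n) \<le> 9 * real n"
    using variance_eq[OF integrable_block_occupation_sum] expectation_block_occupation_sum_sq[of n]
    by (simp add: expectation_block_occupation_sum power_divide)
  have "prob {\<omega>\<in>space M. block_occupation_sum n \<omega> \<le> real n / 4}
      \<le> prob {\<omega>\<in>space M. real n / 4 \<le> \<bar>block_occupation_sum n \<omega> - real n / 2\<bar>}"
    by (rule finite_measure_mono) auto
  also have "\<dots> \<le> variance (block_occupation_sum n) / (real n / 4)\<^sup>2"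
    using Chebyshev_inequality[OF borel_measurable_block_occupation_sum _ divide_pos_pos[of "real n" 4]]
      assms integrable_block_occupation_sum(2)
    by (simp add: expectation_block_occupation_sum)
  also have "\<dots> \<le> 9 * real n / (real n / 4)\<^sup>2"
    by (rule divide_right_mono[OF var]) simp
  also have "\<dots> = 144 / real n" using assms by (simp add: power2_eq_square field_simps)
  finally show ?thesis .
qed

lemma AE_block_occupation_sum_unbounded: "AE \<omega> in M. \<forall>c. \<exists>n. c \<le> block_occupation_sum n \<omega>"
proof -
  have "AE \<omega> in M. \<exists>n. real c \<le> block_occupation_sum n \<omega>" for c :: nat
  proof (rule AE_I')
    define N where "N = {\<omega>\<in>space M. \<forall>n. block_occupation_sum n \<omega> < real c}"
    have "N \<in> sets M" unfolding N_def by measurable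
    have "prob N \<le> 144 / real n" if "4 * c \<le> n" "0 < n" for n
    proof -
      have "real c \<le> real n / 4" using that by simp
      then have "N \<subseteq> {\<omega>\<in>space M. block_occupation_sum n \<omega> \<le> real n / 4}"
        unfolding N_def by (auto dest: spec[of _ n])
      then have "prob N \<le> prob {\<omega>\<in>space M. block_occupation_sum n \<omega> \<le> real n / 4}"
        by (rule finite_measure_mono) measurable
      also have "\<dots> \<le> 144 / real n" by (rule prob_block_occupation_sum_small[OF \<open>0 < n\<close>])
      finally show ?thesis .
    qed
    moreover have "(\<lambda>n. 144 / real n) \<longlonglongrightarrow> 0" by real_asymp
    ultimately have "prob N \<le> 0"
      by (intro LIMSEQ_le_const[of "\<lambda>n. 144 / real n"]) (auto intro: exI[of _ "Suc (4 * c)"])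
    then show "N \<in> null_sets M"
      using \<open>N \<in> sets M\<close> measure_nonneg[of M N] by (auto simp: null_sets_def emeasure_eq_measure)
    show "{\<omega>\<in>space M. \<not> (\<exists>n. real c \<le> block_occupation_sum n \<omega>)} \<subseteq> N"
      unfolding N_def by (auto simp: not_le)
  qed
  then have "AE \<omega> in M. \<forall>c::nat. \<exists>n. real c \<le> block_occupation_sum n \<omega>"
    by (simp add: AE_all_countable)
  then show ?thesis
    by (rule eventually_mono) (meson order_trans real_nat_ceiling_ge)
qed

lemma AE_occupation_unbounded: "AE \<omega> in M. \<forall>c. \<exists>s\<ge>0. c \<le> occupation (B \<omega>) s"
  using AE_block_occupation_sum_unbounded AE_space
proof eventually_elim
  case (elim \<omega>)
  show ?case
  proof
    fix c :: real
    obtain n where "c \<le> block_occupation_sum n \<omega>" using elim(1) by blast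
    then have "c \<le> occupation (B \<omega>) (block_start n)"
      using block_occupation_sum_le_occupation[OF elim(2)] by (rule order_trans)
    moreover have "0 \<le> block_start n" using block_start_ge_1[of n] by simp
    ultimately show "\<exists>s\<ge>0. c \<le> occupation (B \<omega>) s" by blast
  qed
qed

end

theorem mainTheorem5:
  fixes M :: "'a measure" and B :: "'a \<Rightarrow> real \<Rightarrow> real"
  assumes "std_brownian_motion M B"
  shows "AE \<omega> in M. B \<omega> \<notin> Dg"
proof -
  interpret brownian_motion M B by unfold_locales (fact assms)
  show ?thesis
    using AE_zero_set_null AE_occupation_unbounded AE_space
  proof eventually_elim
    case (elim \<omega>)
    then show ?case by (intro not_in_Dg continuous_B) auto
  qed
qed

end
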